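(* Suppose $x_1=-x_2\neq0$. Then the condition number $\kappa$ of $M$ has density, for $\sigma\ge1$, $$f(\sigma;L,\beta)=\frac{2\,\sigma^{\frac{\beta L}{2}-\frac{\beta}{2}-1}\,\Gamma\!\left(\beta L-\beta+1\right)(\sigma+1)^{-\beta(L-1)}}{\beta(L-1)\,\Gamma\!\left(\frac{\beta}{2}(L-1)\right)^{2}}.$$ In particular, for $L=2$ and $\beta=1$, $f(\sigma;2,1)=\dfrac{2}{\pi\sqrt{\sigma}\,(\sigma+1)}$.
   Context: Fix an integer $L\ge 2$, a real parameter $\beta>0$, and nonzero reals $x_1,x_2$. Let $\Sigma=\mathrm{diag}(x_1,x_2)$. For $k>0$, $\chi_k$ denotes the distribution on $[0,\infty)$ with density $\frac{x^{k-1}e^{-x^{2}/2}}{2^{k/2-1}\Gamma(k/2)}$. Let $a,b,c$ be independent random variables with $a\sim\chi_{\beta L}$, $b\sim\chi_{\beta}$ and $c\sim\chi_{\beta(L-1)}$. Set $R=\begin{pmatrix}a&b\\0&c\end{pmatrix}$ and $M=R\Sigma R^{T}$. For $\beta=1,2,4$, $M$ has the same eigenvalues as $W^{*}W\Sigma$, where $W$ is $L\times2$ with i.i.d. standard real, complex or quaternionic Gaussian entries. The condition number is $\kappa=|\lambda_{\max}|/|\lambda_{\min}|\ge1$, the ratio of the larger to the smaller absolute value of the two eigenvalues of $M$. *)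

theory Defs
  imports "HOL-Probability.Probability"
begin

definition chi_density :: "real \<Rightarrow> real \<Rightarrow> real" where
  "chi_density k x = (if 0 < x then
      x powr (k - 1) * exp (- (x^2) / 2) / (2 powr (k / 2 - 1) * Gamma (k / 2)) else 0)"

definition Rmat :: "real \<Rightarrow> real \<Rightarrow> real \<Rightarrow> real^2^2" where
  "Rmat a b c = vector [vector [a, b], vector [0, c]]"

definition Sigma_mat :: "real \<Rightarrow> real \<Rightarrow> real^2^2" where
  "Sigma_mat x1 x2 = vector [vector [x1, 0], vector [0, x2]]"

definition Mmat :: "real \<Rightarrow> real \<Rightarrow> real \<Rightarrow> real \<Rightarrow> real \<Rightarrow> real^2^2" where
  "Mmat x1 x2 a b c = Rmat a b c ** Sigma_mat x1 x2 ** transpose (Rmat a b c)"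

definition real_eigenvalues :: "real^'n^'n \<Rightarrow> real set" where
  "real_eigenvalues A = {l. \<exists>v. v \<noteq> 0 \<and> A *v v = l *\<^sub>R v}"

definition cond_number :: "real^'n^'n \<Rightarrow> real" where
  "cond_number A = Max (abs ` real_eigenvalues A) / Min (abs ` real_eigenvalues A)"

definition f_kappa :: "nat \<Rightarrow> real \<Rightarrow> real \<Rightarrow> real" where
  "f_kappa L \<beta> \<sigma> =
     2 * \<sigma> powr (\<beta> * real L / 2 - \<beta> / 2 - 1) * Gamma (\<beta> * real L - \<beta> + 1)
       * (\<sigma> + 1) powr (- \<beta> * (real L - 1))
     / (\<beta> * (real L - 1) * (Gamma (\<beta> / 2 * (real L - 1)))^2)"

end

theory Submission
  imports Defs
begin

text \<open>
  For \<open>x\<^sub>2 = -x\<^sub>1\<close> the matrix \<open>M\<close> has determinant \<open>-x\<^sub>1\<^sup>2 a\<^sup>2 c\<^sup>2 < 0\<close>, so its eigenvalues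
  have opposite signs and can be written \<open>x\<^sub>1 a c / t\<close> and \<open>-x\<^sub>1 a c t\<close> with \<open>t > 0\<close>; then
  \<open>\<kappa> = max (t\<^sup>2) (t\<^sup>-\<^sup>2)\<close>, and matching the trace gives \<open>b = sqrt ((a - c/t) (a + c t))\<close>, an
  increasing bijection from \<open>t > c/a\<close> onto \<open>b > 0\<close>. After substituting \<open>t\<close> for \<open>b\<close> and
  \<open>a = c \<alpha>\<close>, the \<open>c\<close>-integral is a Gaussian moment and an affine change of \<open>\<alpha>\<close> splits
  off the \<open>t\<close>-dependence of the \<open>\<alpha>\<close>-integral, so \<open>t\<close> has density proportional to
  \<open>t\<^sup>k\<^sup>-\<^sup>1 (1 + t\<^sup>2)\<^sup>-\<^sup>k\<close> with \<open>k = \<beta> (L - 1)\<close>. The substitutions \<open>s = t\<^sup>2\<close> on \<open>t > 1\<close> and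
  \<open>s = t\<^sup>-\<^sup>2\<close> on \<open>t < 1\<close> turn this into a multiple of \<open>s\<^sup>k\<^sup>/\<^sup>2\<^sup>-\<^sup>1 (1 + s)\<^sup>-\<^sup>k\<close> on \<open>s > 1\<close>;
  the constant is never computed but forced by the total mass being one, since the integral of
  this function over \<open>s > 1\<close> is \<open>B(k/2, k/2) / 2\<close>.
\<close>

section \<open>The condition number of \<open>M\<close>\<close>

lemma real_eigenvalues_iff_det:
  fixes A :: "real^'n^'n"
  shows "l \<in> real_eigenvalues A \<longleftrightarrow> det (A - l *\<^sub>R mat 1) = 0"
proof -
  have "A *v v = l *\<^sub>R v \<longleftrightarrow> (A - l *\<^sub>R mat 1) *v v = 0" for v
    by (simp add: matrix_vector_mult_diff_rdistrib scaleR_matrix_vector_assoc[symmetric])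
  then show ?thesis
    using matrix_nonfull_linear_equations_eq[of "A - l *\<^sub>R mat 1"]
      det_eq_0_rank[of "A - l *\<^sub>R mat 1"] rank_bound[of "A - l *\<^sub>R mat 1"]
    by (auto simp: real_eigenvalues_def)
qed

lemma real_eigenvalues_vector2:
  fixes p q s r :: real
  assumes "l1 + l2 = p + r" and "l1 * l2 = p * r - q * s"
  shows "real_eigenvalues (vector [vector [p, q], vector [s, r]] :: real^2^2) = {l1, l2}"
proof -
  have "det (vector [vector [p, q], vector [s, r]] - l *\<^sub>R mat 1 :: real^2^2) = (l - l1) * (l - l2)"
    for l
  proof -
    have "(l - l1) * (l - l2) = l * l - (l1 + l2) * l + l1 * l2"
      by (simp add: algebra_simps)
    then show ?thesis
      by (simp add: det_2 mat_def assms algebra_simps)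
  qed
  then show ?thesis
    by (auto simp: real_eigenvalues_iff_det)
qed

lemma cond_number_vector2:
  fixes p q s r :: real
  assumes "l1 + l2 = p + r" and "l1 * l2 = p * r - q * s"
  shows "cond_number (vector [vector [p, q], vector [s, r]] :: real^2^2)
     = max (\<bar>l1\<bar>) (\<bar>l2\<bar>) / min (\<bar>l1\<bar>) (\<bar>l2\<bar>)"
  unfolding cond_number_def real_eigenvalues_vector2[OF assms] by simp

lemma Mmat_vector2:
  "Mmat x1 x2 a b c = vector [vector [x1*a^2 + x2*b^2, x2*b*c], vector [x2*b*c, x2*c^2]]"
  by (auto simp: Mmat_def Rmat_def Sigma_mat_def vec_eq_iff matrix_matrix_mult_def transpose_def
      sum_2 forall_2 power2_eq_square algebra_simps)

lemma cond_number_Mmat: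
  "cond_number (Mmat x1 x2 a b c) =
     (let p = x1*a^2 + x2*b^2; q = x2*b*c; r = x2*c^2; d = sqrt ((p - r)^2 + 4 * q^2);
          l1 = (p + r + d) / 2; l2 = (p + r - d) / 2
      in max (\<bar>l1\<bar>) (\<bar>l2\<bar>) / min (\<bar>l1\<bar>) (\<bar>l2\<bar>))"
proof -
  define p q r where "p = x1*a^2 + x2*b^2" and "q = x2*b*c" and "r = x2*c^2"
  define d where "d = sqrt ((p - r)^2 + 4 * q^2)"
  have "d^2 = (p - r)^2 + 4 * q^2"
    unfolding d_def by simp
  then have "(p + r + d) / 2 * ((p + r - d) / 2) = p * r - q * q"
    by (simp add: field_simps power2_eq_square)
  moreover have "(p + r + d) / 2 + (p + r - d) / 2 = p + r"
    by (simp add: field_simps)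
  ultimately show ?thesis
    unfolding Mmat_vector2 Let_def p_def[symmetric] q_def[symmetric] r_def[symmetric] d_def[symmetric]
    by (intro cond_number_vector2)
qed

lemma borel_measurable_cond_number_Mmat [measurable]:
  assumes [measurable]: "f \<in> borel_measurable M" "g \<in> borel_measurable M" "h \<in> borel_measurable M"
  shows "(\<lambda>w. cond_number (Mmat x1 x2 (f w) (g w) (h w))) \<in> borel_measurable M"
  unfolding cond_number_Mmat Let_def by measurable

text \<open>With \<open>x\<^sub>2 = -x\<^sub>1\<close>, prescribing the eigenvalues \<open>x\<^sub>1 a c / t\<close> and \<open>-x\<^sub>1 a c t\<close> fixes the
  determinant automatically and, through the trace, forces \<open>b\<^sup>2 = (a - c/t) (a + c t)\<close>.\<close>

definition b_of_param :: "real \<Rightarrow> real \<Rightarrow> real \<Rightarrow> real" where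
  "b_of_param a c t = sqrt ((a - c / t) * (a + c * t))"

definition b_of_param_deriv :: "real \<Rightarrow> real \<Rightarrow> real \<Rightarrow> real" where
  "b_of_param_deriv a c t = a * c * (1 + 1 / t^2) / (2 * b_of_param a c t)"

definition cond_of_param :: "real \<Rightarrow> real" where
  "cond_of_param t = max (t^2) (1 / t^2)"

lemma borel_measurable_cond_of_param [measurable]: "cond_of_param \<in> borel_measurable borel"
  unfolding cond_of_param_def by measurable

lemma b_of_param_pos:
  assumes "a > 0" and "c > 0" and "t > c / a"
  shows "t > 0" and "(a - c / t) * (a + c * t) > 0" and "b_of_param a c t > 0"
proof -
  show t: "t > 0"
    using assms by (smt (verit) divide_pos_pos)
  have "c / t < a"
    using assms t by (simp add: field_simps mult.commute)
  then show "(a - c / t) * (a + c * t) > 0"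
    using assms t by (intro mult_pos_pos) (auto intro: add_pos_pos)
  then show "b_of_param a c t > 0"
    by (simp add: b_of_param_def)
qed

lemma b_of_param_deriv_nonneg:
  assumes "a > 0" and "c > 0" and "t > c / a"
  shows "b_of_param_deriv a c t \<ge> 0"
  using b_of_param_pos[OF assms] assms unfolding b_of_param_deriv_def
  by (intro divide_nonneg_pos mult_nonneg_nonneg) (auto intro: add_nonneg_nonneg)

lemma cond_of_param_eq_ratio:
  assumes "t > 0"
  shows "cond_of_param t = max (1 / t) t / min (1 / t) t"
proof -
  have le_inverse_iff: "y \<le> 1 / y \<longleftrightarrow> y \<le> 1" if "y > 0" for y :: real
    using that by (smt (verit) le_divide_eq_1_pos)
  have "t \<le> 1 \<longleftrightarrow> t^2 \<le> 1"
    using assms by (simp add: power_le_one_iff)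
  then show ?thesis
    using assms le_inverse_iff[of t] le_inverse_iff[of "t^2"]
    unfolding cond_of_param_def by (auto simp: max_def min_def field_simps power2_eq_square)
qed

lemma cond_number_Mmat_b_of_param:
  assumes "x \<noteq> 0" and "a > 0" and "c > 0" and "t > c / a"
  shows "cond_number (Mmat x (-x) a (b_of_param a c t) c) = cond_of_param t"
proof -
  note pos = b_of_param_pos[OF assms(2-4)]
  define b where "b = b_of_param a c t"
  have b2: "b^2 = (a - c / t) * (a + c * t)"
    unfolding b_def b_of_param_def using pos by simp
  have "cond_number (Mmat x (-x) a b c)
      = max (\<bar>x * a * c / t\<bar>) (\<bar>- x * a * c * t\<bar>) / min (\<bar>x * a * c / t\<bar>) (\<bar>- x * a * c * t\<bar>)"
  proof (unfold Mmat_vector2, rule cond_number_vector2)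
    show "x * a * c / t + - x * a * c * t = (x * a^2 + - x * b^2) + - x * c^2"
      unfolding b2 using pos(1) by (simp add: field_simps power2_eq_square)
    show "x * a * c / t * (- x * a * c * t)
        = (x * a^2 + - x * b^2) * (- x * c^2) - - x * b * c * (- x * b * c)"
      using pos(1) by (simp add: field_simps power2_eq_square)
  qed
  also have "\<dots> = max (1 / t) t / min (1 / t) t"
  proof -
    have "\<bar>x * a * c / t\<bar> = (\<bar>x\<bar> * a * c) * (1 / t)" "\<bar>- x * a * c * t\<bar> = (\<bar>x\<bar> * a * c) * t"
      using assms pos(1) by (simp_all add: abs_mult)
    moreover have "max (k * u) (k * v) / min (k * u) (k * v) = max u v / min u v"
      if "k > 0" for k u v :: real
      using that by (cases "u \<le> v") (auto simp: max_def min_def)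
    moreover have "\<bar>x\<bar> * a * c > 0"
      using assms by simp
    ultimately show ?thesis
      by presburger
  qed
  also have "\<dots> = cond_of_param t"
    using pos(1) by (rule cond_of_param_eq_ratio[symmetric])
  finally show ?thesis
    unfolding b_def .
qed

section \<open>Substitution on open intervals\<close>

lemma indicator_UN_eq_SUP:
  fixes A :: "nat \<Rightarrow> 'a set"
  shows "indicator (\<Union>n. A n) x = (SUP n. indicator (A n) x :: ennreal)"
proof (cases "x \<in> (\<Union>n. A n)")
  case True
  then obtain m where "x \<in> A m"
    by auto
  then have "(SUP n. indicator (A n) x :: ennreal) = 1"
    by (intro antisym SUP_least SUP_upper2[of m]) (auto simp: indicator_def)
  then show ?thesis
    using True by simp
qed simp

lemma nn_integral_indicator_UN_incseq:
  fixes f :: "'a \<Rightarrow> ennreal"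
  assumes "incseq A" and "\<And>n. (\<lambda>x. f x * indicator (A n) x) \<in> borel_measurable M"
  shows "(\<integral>\<^sup>+x. f x * indicator (\<Union>n. A n) x \<partial>M) = (SUP n. \<integral>\<^sup>+x. f x * indicator (A n) x \<partial>M)"
proof -
  have "incseq (\<lambda>n x. f x * indicator (A n) x)"
    using assms(1) unfolding incseq_def le_fun_def
    by (auto intro!: mult_left_mono simp: indicator_def subset_eq)
  then show ?thesis
    unfolding indicator_UN_eq_SUP SUP_mult_left_ennreal
    by (rule nn_integral_monotone_convergence_SUP[OF _ assms(2)])
qed

lemma continuous_mono_on_image_Icc:
  fixes g :: "real \<Rightarrow> real"
  assumes "l \<le> u" and "continuous_on {l..u} g" and "mono_on {l..u} g"
  shows "g ` {l..u} = {g l..g u}"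
proof
  show "g ` {l..u} \<subseteq> {g l..g u}"
    using assms(1,3) by (auto intro!: mono_onD[OF assms(3)])
  show "{g l..g u} \<subseteq> g ` {l..u}"
    using IVT'[of g l _ u] assms(1,2) by (force simp: image_iff)
qed

lemma borel_measurable_continuous_on_comp_indicator:
  fixes F :: "real \<Rightarrow> ennreal" and g h :: "real \<Rightarrow> real"
  assumes [measurable]: "F \<in> borel_measurable borel" "S \<in> sets borel"
    and "continuous_on S g" and "continuous_on S h"
  shows "(\<lambda>x. F (g x) * ennreal (h x) * indicator S x) \<in> borel_measurable borel"
proof -
  have [measurable]: "(\<lambda>x. indicator S x *\<^sub>R g x) \<in> borel_measurable borel"
    "(\<lambda>x. indicator S x *\<^sub>R h x) \<in> borel_measurable borel"
    using borel_measurable_continuous_on_indicator[OF assms(2,3)]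
      borel_measurable_continuous_on_indicator[OF assms(2,4)] by auto
  have "(\<lambda>x. F (indicator S x *\<^sub>R g x) * ennreal (indicator S x *\<^sub>R h x) * indicator S x)
      \<in> borel_measurable borel"
    by measurable
  then show ?thesis
    by (rule measurable_cong[THEN iffD1, rotated]) (auto simp: indicator_def)
qed

lemma nn_integral_lborel_stretch:
  fixes f :: "real \<Rightarrow> ennreal"
  assumes [measurable]: "f \<in> borel_measurable borel" and "c > 0"
  shows "(\<integral>\<^sup>+x. f x \<partial>lborel) = (\<integral>\<^sup>+y. ennreal c * f (c * y) \<partial>lborel)"
  using nn_integral_real_affine[of f c 0] \<open>c > 0\<close> by (simp add: nn_integral_cmult)

text \<open>Exhaust the open interval by an increasing sequence of compact intervals and pass to the
  limit in the library's substitution rule for compact intervals.\<close>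

lemma nn_integral_substitution_einterval:
  fixes g g' :: "real \<Rightarrow> real" and F :: "real \<Rightarrow> ennreal" and a b :: ereal
  assumes F [measurable]: "F \<in> borel_measurable borel" and "a < b"
    and deriv: "\<And>x. x \<in> einterval a b \<Longrightarrow> (g has_real_derivative g' x) (at x)"
    and cont: "continuous_on (einterval a b) g'"
    and nonneg: "\<And>x. x \<in> einterval a b \<Longrightarrow> 0 \<le> g' x"
  shows "(\<integral>\<^sup>+x. F x * indicator (g ` einterval a b) x \<partial>lborel)
       = (\<integral>\<^sup>+x. F (g x) * ennreal (g' x) * indicator (einterval a b) x \<partial>lborel)"
proof -
  obtain u l where D: "einterval a b = (\<Union>n. {l n..u n})"
    and "incseq u" "decseq l" and lu: "\<And>n. l n < u n"
    using einterval_Icc_approximation[OF \<open>a < b\<close>] by metis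
  have sub: "{l n..u n} \<subseteq> einterval a b" for n
    unfolding D by auto
  have nest: "{l n..u n} \<subseteq> {l m..u m}" if "n \<le> m" for n m
    using \<open>incseq u\<close> \<open>decseq l\<close> that by (auto simp: decseq_def incseq_def intro: order.trans)
  have mono: "mono_on (einterval a b) g"
  proof (rule mono_onI)
    fix x y
    assume "x \<in> einterval a b" "y \<in> einterval a b" "x \<le> y"
    then have "{x..y} \<subseteq> einterval a b"
      by (fastforce simp: einterval_iff
          intro: order.strict_trans2[of a "ereal x"] order.strict_trans1[of _ "ereal y" b])
    then show "g x \<le> g y"
      using deriv nonneg \<open>x \<le> y\<close> by (intro deriv_nonneg_imp_mono[of x y g g']) auto
  qed
  have cont_g: "continuous_on {l n..u n} g" for n
    using deriv sub[of n] by (intro has_real_derivative_imp_continuous_on[where f'=g']) auto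
  have image: "g ` {l n..u n} = {g (l n)..g (u n)}" for n
    using lu[of n] cont_g[of n] mono_on_subset[OF mono sub[of n]]
    by (intro continuous_mono_on_image_Icc) auto
  have rhs_measurable: "(\<lambda>x. F (g x) * ennreal (g' x) * indicator {l n..u n} x) \<in> borel_measurable borel"
    for n
    using borel_measurable_continuous_on_comp_indicator[OF F _ cont_g[of n] continuous_on_subset[OF cont sub[of n]]]
    by simp
  have "incseq (\<lambda>n. {g (l n)..g (u n)})"
    unfolding image[symmetric] incseq_def by (intro allI impI image_mono nest)
  moreover have "g ` einterval a b = (\<Union>n. {g (l n)..g (u n)})"
    unfolding D image[symmetric] by auto
  ultimately have "(\<integral>\<^sup>+x. F x * indicator (g ` einterval a b) x \<partial>lborel)
      = (SUP n. \<integral>\<^sup>+x. F x * indicator {g (l n)..g (u n)} x \<partial>lborel)"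
    by (simp add: nn_integral_indicator_UN_incseq)
  moreover have "incseq (\<lambda>n. {l n..u n})"
    using nest by (auto simp: incseq_def)
  then have "(\<integral>\<^sup>+x. F (g x) * ennreal (g' x) * indicator (einterval a b) x \<partial>lborel)
      = (SUP n. \<integral>\<^sup>+x. F (g x) * ennreal (g' x) * indicator {l n..u n} x \<partial>lborel)"
    unfolding D by (rule nn_integral_indicator_UN_incseq) (simp add: rhs_measurable)
  moreover have "(\<integral>\<^sup>+x. F x * indicator {g (l n)..g (u n)} x \<partial>lborel)
      = (\<integral>\<^sup>+x. F (g x) * ennreal (g' x) * indicator {l n..u n} x \<partial>lborel)" for n
    using sub[of n] lu[of n] by (intro nn_integral_substitution_aux[OF F])
      (auto intro: deriv nonneg continuous_on_subset[OF cont])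
  ultimately show ?thesis
    by simp
qed

text \<open>The antitone case follows from the monotone one by the reflection \<open>x \<mapsto> -x\<close>.\<close>

lemma nn_integral_substitution_einterval_antimono:
  fixes g g' :: "real \<Rightarrow> real" and F :: "real \<Rightarrow> ennreal" and a b :: ereal
  assumes F [measurable]: "F \<in> borel_measurable borel" and "a < b"
    and deriv: "\<And>x. x \<in> einterval a b \<Longrightarrow> (g has_real_derivative g' x) (at x)"
    and cont: "continuous_on (einterval a b) g'"
    and nonpos: "\<And>x. x \<in> einterval a b \<Longrightarrow> g' x \<le> 0"
  shows "(\<integral>\<^sup>+x. F x * indicator (g ` einterval a b) x \<partial>lborel)
       = (\<integral>\<^sup>+x. F (g x) * ennreal (- g' x) * indicator (einterval a b) x \<partial>lborel)"
proof -
  have reflect: "x \<in> einterval (- b) (- a) \<longleftrightarrow> - x \<in> einterval a b" for x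
    using ereal_uminus_less_reorder[of b "ereal x"] ereal_less_uminus_reorder[of "ereal x" a]
    by (auto simp: einterval_iff)
  have "einterval (- b) (- a) = uminus ` einterval a b"
    using reflect by (force simp: image_iff)
  then have image: "g ` einterval a b = (\<lambda>y. g (- y)) ` einterval (- b) (- a)"
    by (auto simp: image_image)
  have "(\<integral>\<^sup>+x. F x * indicator (g ` einterval a b) x \<partial>lborel)
      = (\<integral>\<^sup>+x. F (g (- x)) * ennreal (- g' (- x)) * indicator (einterval (- b) (- a)) x \<partial>lborel)"
    unfolding image
  proof (rule nn_integral_substitution_einterval[OF F])
    show "- b < - a"
      using \<open>a < b\<close> by simp
    show "((\<lambda>y. g (- y)) has_real_derivative - g' (- x)) (at x)" if "x \<in> einterval (- b) (- a)" for x
    proof -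
      have "((\<lambda>y. g (- y)) has_real_derivative g' (- x) * (- 1)) (at x)"
        using deriv[of "- x"] that reflect
        by (intro DERIV_chain'[where f=uminus]) (auto intro!: derivative_eq_intros)
      then show ?thesis
        by simp
    qed
    have "continuous_on (einterval (- b) (- a)) (g' \<circ> uminus)"
      using reflect by (intro continuous_on_compose continuous_intros continuous_on_subset[OF cont]) auto
    then show "continuous_on (einterval (- b) (- a)) (\<lambda>x. - g' (- x))"
      by (auto simp: o_def intro!: continuous_intros)
    show "0 \<le> - g' (- x)" if "x \<in> einterval (- b) (- a)" for x
      using nonpos[of "- x"] that reflect by auto
  qed
  also have "\<dots> = (\<integral>\<^sup>+x. F (g x) * ennreal (- g' x) * indicator (einterval a b) x \<partial>lborel)"
  proof -
    have "continuous_on (einterval a b) g"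
      using deriv by (intro has_real_derivative_imp_continuous_on) auto
    then have "(\<lambda>x. F (g x) * ennreal (- g' x) * indicator (einterval a b) x) \<in> borel_measurable borel"
      using borel_measurable_continuous_on_comp_indicator[OF F borel_einterval _ continuous_on_minus[OF cont]]
      by simp
    from nn_integral_real_affine[OF this, of "- 1" 0] show ?thesis
      by (simp add: reflect indicator_def)
  qed
  finally show ?thesis .
qed

section \<open>Replacing \<open>b\<close> by the eigenvalue ratio\<close>

lemma chi_density_nonneg: "k > 0 \<Longrightarrow> chi_density k x \<ge> 0"
  unfolding chi_density_def by (auto intro!: divide_nonneg_pos)

lemma borel_measurable_chi_density [measurable]: "chi_density k \<in> borel_measurable borel"
  unfolding chi_density_def by measurable

lemma b_of_param_image:
  assumes "a > 0" and "c > 0"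
  shows "b_of_param a c ` {c / a<..} = {0<..}"
proof (intro equalityI subsetI)
  fix y
  assume "y \<in> b_of_param a c ` {c / a<..}"
  then show "y \<in> {0<..}"
    using b_of_param_pos[OF assms] by auto
next
  fix y :: real
  assume "y \<in> {0<..}"
  then have y: "y > 0"
    by simp
  define w where "w = a^2 - c^2 - y^2"
  define t where "t = (- w + sqrt (w^2 + 4 * a^2 * c^2)) / (2 * a * c)"
  have "sqrt (w^2 + 4 * a^2 * c^2) > sqrt (w^2)"
    using assms by (intro real_sqrt_less_mono) auto
  then have t: "t > 0"
    unfolding t_def using assms by (intro divide_pos_pos) auto
  have "a * c * t^2 + w * t - a * c = 0"
    unfolding t_def using assms by (simp add: field_simps power2_eq_square)
  then have y2: "(a - c / t) * (a + c * t) = y^2"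
    using t unfolding w_def by (simp add: field_simps power2_eq_square)
  have "a + c * t > 0"
    using assms t by (simp add: add_pos_pos)
  then have "a - c / t > 0"
    using y2 y by (smt (verit) mult_le_0_iff zero_less_power)
  then have "t > c / a"
    using t assms by (simp add: field_simps)
  moreover have "b_of_param a c t = y"
    unfolding b_of_param_def y2 using y by simp
  ultimately show "y \<in> b_of_param a c ` {c / a<..}"
    by force
qed

lemma has_real_derivative_b_of_param:
  assumes "a > 0" and "c > 0" and "t > c / a"
  shows "(b_of_param a c has_real_derivative b_of_param_deriv a c t) (at t)"
proof -
  note pos = b_of_param_pos[OF assms]
  have "((\<lambda>t. sqrt ((a - c / t) * (a + c * t))) has_real_derivative
        ((c / t^2) * (a + c * t) + (a - c / t) * c) / (2 * sqrt ((a - c / t) * (a + c * t)))) (at t)"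
    using pos by (auto intro!: derivative_eq_intros simp: power2_eq_square) (simp add: field_simps)
  moreover have "((c / t^2) * (a + c * t) + (a - c / t) * c) / (2 * sqrt ((a - c / t) * (a + c * t)))
      = b_of_param_deriv a c t"
    unfolding b_of_param_deriv_def b_of_param_def using pos by (simp add: field_simps power2_eq_square)
  ultimately show ?thesis
    unfolding b_of_param_def[abs_def] by simp
qed

lemma continuous_on_b_of_param_deriv:
  assumes "a > 0" and "c > 0"
  shows "continuous_on {c / a<..} (b_of_param_deriv a c)"
proof -
  have "continuous_on {c / a<..} (\<lambda>t. a * c * (1 + 1 / t^2) / (2 * sqrt ((a - c / t) * (a + c * t))))"
  proof (intro continuous_intros ballI)
    fix t
    assume "t \<in> {c / a<..}"
    then have "t > 0" and "(a - c / t) * (a + c * t) > 0"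
      using b_of_param_pos[OF assms] by auto
    then show "t \<noteq> 0" and "t^2 \<noteq> 0" and "2 * sqrt ((a - c / t) * (a + c * t)) \<noteq> 0"
      by auto
  qed
  then show ?thesis
    unfolding b_of_param_deriv_def[abs_def] b_of_param_def .
qed

lemma nn_integral_cond_number_over_b:
  fixes G :: "real \<Rightarrow> ennreal"
  assumes G [measurable]: "G \<in> borel_measurable borel"
    and "x \<noteq> 0" and a: "a > 0" and c: "c > 0" and "k > 0"
  shows "(\<integral>\<^sup>+b. G (cond_number (Mmat x (-x) a b c)) * ennreal (chi_density k b) \<partial>lborel)
       = (\<integral>\<^sup>+t. G (cond_of_param t) * ennreal (chi_density k (b_of_param a c t) * b_of_param_deriv a c t)
            * indicator {c / a<..} t \<partial>lborel)"
proof -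
  define F where "F b = G (cond_number (Mmat x (-x) a b c)) * ennreal (chi_density k b)" for b
  have [measurable]: "F \<in> borel_measurable borel"
    unfolding F_def by measurable
  have "(\<integral>\<^sup>+b. G (cond_number (Mmat x (-x) a b c)) * ennreal (chi_density k b) \<partial>lborel)
      = (\<integral>\<^sup>+b. F b * indicator (b_of_param a c ` einterval (c / a) \<infinity>) b \<partial>lborel)"
    unfolding einterval_eq b_of_param_image[OF a c] F_def
    by (intro nn_integral_cong) (auto simp: indicator_def chi_density_def)
  also have "\<dots> = (\<integral>\<^sup>+t. F (b_of_param a c t) * ennreal (b_of_param_deriv a c t)
      * indicator (einterval (c / a) \<infinity>) t \<partial>lborel)"
    using has_real_derivative_b_of_param[OF a c] continuous_on_b_of_param_deriv[OF a c]
      b_of_param_deriv_nonneg[OF a c]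
    by (intro nn_integral_substitution_einterval) auto
  also have "\<dots> = (\<integral>\<^sup>+t. G (cond_of_param t) * ennreal (chi_density k (b_of_param a c t) * b_of_param_deriv a c t)
      * indicator {c / a<..} t \<partial>lborel)"
    using cond_number_Mmat_b_of_param[OF \<open>x \<noteq> 0\<close> a c] b_of_param_deriv_nonneg[OF a c]
      chi_density_nonneg[OF \<open>k > 0\<close>]
    by (intro nn_integral_cong) (simp add: F_def indicator_def ennreal_mult mult.assoc)
  finally show ?thesis .
qed

section \<open>Integrating out \<open>a\<close> and \<open>c\<close>\<close>

definition chi_const :: "real \<Rightarrow> real" where
  "chi_const k = 2 powr (k / 2 - 1) * Gamma (k / 2)"

lemma chi_const_pos: "k > 0 \<Longrightarrow> chi_const k > 0"
  unfolding chi_const_def by (intro mult_pos_pos) (auto intro: Gamma_real_pos)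

lemma chi_density_eq: "x > 0 \<Longrightarrow> chi_density k x = x powr (k - 1) * exp (- (x^2) / 2) / chi_const k"
  unfolding chi_density_def chi_const_def by simp

text \<open>The joint density of \<open>(a, c, t)\<close> after the substitution \<open>b = b_of_param a c t\<close>.\<close>

definition param_density :: "real \<Rightarrow> real \<Rightarrow> real \<Rightarrow> real \<Rightarrow> real \<Rightarrow> real \<Rightarrow> real" where
  "param_density ka kb kc a c t = (if a > 0 \<and> c > 0 \<and> t > c / a then
     chi_density ka a * chi_density kc c * (chi_density kb (b_of_param a c t) * b_of_param_deriv a c t)
     else 0)"

lemma param_density_nonneg:
  "ka > 0 \<Longrightarrow> kb > 0 \<Longrightarrow> kc > 0 \<Longrightarrow> param_density ka kb kc a c t \<ge> 0"
  unfolding param_density_def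
  by (auto intro!: mult_nonneg_nonneg chi_density_nonneg b_of_param_deriv_nonneg)

lemma borel_measurable_param_density [measurable]:
  assumes [measurable]: "f \<in> borel_measurable M" "g \<in> borel_measurable M" "h \<in> borel_measurable M"
  shows "(\<lambda>w. param_density ka kb kc (f w) (g w) (h w)) \<in> borel_measurable M"
  unfolding param_density_def b_of_param_def b_of_param_deriv_def by measurable

lemma nn_integral_param_density_over_a:
  assumes "ka > 0" "kb > 0" "kc > 0"
  shows "(\<integral>\<^sup>+a. ennreal (param_density ka kb kc a c t) \<partial>lborel)
       = (\<integral>\<^sup>+\<alpha>. ennreal (c * param_density ka kb kc (c * \<alpha>) c t) \<partial>lborel)"
proof (cases "c > 0")
  case True
  then show ?thesis
    using param_density_nonneg[OF assms]
    by (subst nn_integral_lborel_stretch[of _ c]) (simp_all add: ennreal_mult)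
qed (simp add: param_density_def)

definition alpha_density :: "real \<Rightarrow> real \<Rightarrow> real \<Rightarrow> real \<Rightarrow> real" where
  "alpha_density ka kb t \<alpha> = (2 * \<alpha> + t - 1 / t) powr (- ka)
     * ((\<alpha> - 1 / t) * (\<alpha> + t)) powr ((kb - 2) / 2) * (1 + 1 / t^2)"

lemma alpha_density_nonneg: "alpha_density ka kb t \<alpha> \<ge> 0"
  unfolding alpha_density_def by (auto intro!: mult_nonneg_nonneg add_nonneg_nonneg)

lemma param_density_scaled:
  assumes k: "ka = kb + kc" "kb > 0" "kc > 0" and t: "t > 0" and c: "c > 0" and \<alpha>: "\<alpha> > 1 / t"
  shows "c * param_density ka kb kc (c * \<alpha>) c t =
    c powr (2 * ka - 1) * exp (- (c^2 * (\<alpha> * (2 * \<alpha> + t - 1 / t))) / 2) *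
    (\<alpha> powr ka * ((\<alpha> - 1 / t) * (\<alpha> + t)) powr ((kb - 2) / 2) * (1 + 1 / t^2)
      / (2 * chi_const ka * chi_const kb * chi_const kc))"
proof -
  have \<alpha>_pos: "\<alpha> > 0"
    using \<alpha> t by (smt (verit) divide_pos_pos)
  define S where "S = (\<alpha> - 1 / t) * (\<alpha> + t)"
  have S: "S > 0"
    unfolding S_def using \<alpha> t \<alpha>_pos by (intro mult_pos_pos) auto
  have "(c * \<alpha> - c / t) * (c * \<alpha> + c * t) = c^2 * S"
    unfolding S_def using t by (simp add: field_simps power2_eq_square)
  then have b: "b_of_param (c * \<alpha>) c t = c * sqrt S"
    unfolding b_of_param_def using c by (simp add: real_sqrt_mult)
  have "t > c / (c * \<alpha>)"
    using \<alpha> c \<alpha>_pos t by (simp add: field_simps)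
  then have pd: "param_density ka kb kc (c * \<alpha>) c t = chi_density ka (c * \<alpha>) * chi_density kc c *
      (chi_density kb (c * sqrt S) * ((c * \<alpha>) * c * (1 + 1 / t^2) / (2 * (c * sqrt S))))"
    unfolding param_density_def b_of_param_deriv_def b using c \<alpha>_pos by simp
  have Z: "chi_const ka > 0" "chi_const kb > 0" "chi_const kc > 0"
    using k chi_const_pos by auto
  have t2: "1 + 1 / t^2 > 0"
    by (simp add: add_pos_nonneg)
  have Q: "\<alpha> * (2 * \<alpha> + t - 1 / t) = \<alpha>^2 + 1 + S"
    unfolding S_def using t by (simp add: field_simps power2_eq_square)
  show ?thesis
    unfolding pd S_def[symmetric]
  proof (rule ln_inj_iff[THEN iffD1])
    show "0 < c * (chi_density ka (c * \<alpha>) * chi_density kc c *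
      (chi_density kb (c * sqrt S) * ((c * \<alpha>) * c * (1 + 1 / t^2) / (2 * (c * sqrt S)))))"
      using c \<alpha>_pos S Z t2 by (simp add: chi_density_eq)
    show "0 < c powr (2 * ka - 1) * exp (- (c^2 * (\<alpha> * (2 * \<alpha> + t - 1 / t))) / 2) *
      (\<alpha> powr ka * S powr ((kb - 2) / 2) * (1 + 1 / t^2) / (2 * chi_const ka * chi_const kb * chi_const kc))"
      using c \<alpha>_pos S Z t2 by simp
    show "ln (c * (chi_density ka (c * \<alpha>) * chi_density kc c *
      (chi_density kb (c * sqrt S) * ((c * \<alpha>) * c * (1 + 1 / t^2) / (2 * (c * sqrt S)))))) =
      ln (c powr (2 * ka - 1) * exp (- (c^2 * (\<alpha> * (2 * \<alpha> + t - 1 / t))) / 2) *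
      (\<alpha> powr ka * S powr ((kb - 2) / 2) * (1 + 1 / t^2) / (2 * chi_const ka * chi_const kb * chi_const kc)))"
      using c \<alpha>_pos S Z t2 unfolding Q
      by (simp add: chi_density_eq ln_mult ln_div ln_sqrt power_mult_distrib)
        (simp add: k algebra_simps add_divide_distrib diff_divide_distrib)
  qed
qed

definition gauss_moment :: "real \<Rightarrow> ennreal" where
  "gauss_moment n = (\<integral>\<^sup>+w. ennreal (indicator {0<..} w * w powr (n - 1) * exp (- (w^2) / 2)) \<partial>lborel)"

lemma nn_integral_gauss_moment_scaled:
  assumes Q: "Q > 0"
  shows "(\<integral>\<^sup>+c. ennreal (indicator {0<..} c * c powr (n - 1) * exp (- (c^2 * Q) / 2)) \<partial>lborel)
       = ennreal (Q powr (- n / 2)) * gauss_moment n"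
proof -
  define k where "k = 1 / sqrt Q"
  have k: "k > 0"
    unfolding k_def using Q by simp
  have "k^2 * Q = 1"
    unfolding k_def using Q by (simp add: power_divide)
  then have "ennreal k * ennreal (indicator {0<..} (k * w) * (k * w) powr (n - 1) * exp (- ((k * w)^2 * Q) / 2))
      = ennreal (k powr n) * ennreal (indicator {0<..} w * w powr (n - 1) * exp (- (w^2) / 2))" for w
    using k by (cases "w > 0")
      (simp_all add: ennreal_mult[symmetric] powr_mult powr_diff power_mult_distrib mult_ac
        indicator_def zero_less_mult_iff)
  then have "(\<integral>\<^sup>+c. ennreal (indicator {0<..} c * c powr (n - 1) * exp (- (c^2 * Q) / 2)) \<partial>lborel)
      = ennreal (k powr n) * gauss_moment n"
    unfolding gauss_moment_def using k
    by (subst nn_integral_lborel_stretch[of _ k]) (simp_all add: nn_integral_cmult)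
  moreover have "k powr n = Q powr (- n / 2)"
    unfolding k_def using Q
    by (simp add: powr_divide powr_minus_divide powr_half_sqrt[symmetric] powr_powr)
  ultimately show ?thesis
    by simp
qed

definition t_density :: "real \<Rightarrow> real \<Rightarrow> real" where
  "t_density k t = t powr (k - 1) * (1 + t^2) powr (- k)"

lemma t_density_nonneg: "t_density k t \<ge> 0"
  unfolding t_density_def by simp

lemma borel_measurable_t_density [measurable]: "t_density k \<in> borel_measurable borel"
  unfolding t_density_def by measurable

definition alpha_integral :: "real \<Rightarrow> real \<Rightarrow> ennreal" where
  "alpha_integral ka kb = (\<integral>\<^sup>+v. ennreal (indicator {0<..} v * (2 * v + 1) powr (- ka)
     * (v * (v + 1)) powr ((kb - 2) / 2)) \<partial>lborel)"

text \<open>The substitution \<open>\<alpha> = 1/t + (t + 1/t) v\<close> separates \<open>t\<close> from \<open>v\<close>.\<close>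

lemma alpha_density_affine:
  assumes k: "ka = kb + kc" and t: "t > 0" and v: "v > 0"
  shows "(t + 1 / t) * alpha_density ka kb t (1 / t + (t + 1 / t) * v)
       = t_density kc t * ((2 * v + 1) powr (- ka) * (v * (v + 1)) powr ((kb - 2) / 2))"
proof -
  define m where "m = t + 1 / t"
  have m: "m > 0"
    unfolding m_def using t by (simp add: add_pos_pos)
  have t1: "1 + t^2 > 0"
    by (simp add: add_pos_nonneg)
  have e1: "2 * (1 / t + m * v) + t - 1 / t = m * (2 * v + 1)"
    unfolding m_def by (simp add: algebra_simps)
  have e2: "(1 / t + m * v - 1 / t) * (1 / t + m * v + t) = m^2 * (v * (v + 1))"
    unfolding m_def using t by (simp add: field_simps power2_eq_square)
  have "m = (1 + t^2) / t"
    unfolding m_def using t by (simp add: field_simps power2_eq_square)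
  then have ln_m: "ln m = ln (1 + t^2) - ln t" and ln_m2: "ln (m^2) = 2 * ln (1 + t^2) - 2 * ln t"
    using t t1 m by (simp_all add: ln_div ln_realpow)
  have ln_t2: "ln (t^2) = 2 * ln t"
    using t by (simp add: ln_realpow)
  have tt: "1 + 1 / t^2 = (1 + t^2) / t^2"
    using t by (simp add: field_simps)
  show ?thesis
    unfolding alpha_density_def m_def[symmetric] e1 e2
  proof (rule ln_inj_iff[THEN iffD1])
    show "0 < m * ((m * (2 * v + 1)) powr - ka * (m^2 * (v * (v + 1))) powr ((kb - 2) / 2)
        * (1 + 1 / t^2))"
      using m v by (simp add: add_pos_nonneg)
    show "0 < t_density kc t * ((2 * v + 1) powr - ka * (v * (v + 1)) powr ((kb - 2) / 2))"
      unfolding t_density_def using t t1 v by simp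
    show "ln (m * ((m * (2 * v + 1)) powr - ka * (m^2 * (v * (v + 1))) powr ((kb - 2) / 2)
        * (1 + 1 / t^2))) =
        ln (t_density kc t * ((2 * v + 1) powr - ka * (v * (v + 1)) powr ((kb - 2) / 2)))"
      using m v t t1 unfolding t_density_def tt
      by (simp add: ln_mult ln_div powr_mult ln_m ln_m2 ln_t2)
        (simp add: k algebra_simps add_divide_distrib diff_divide_distrib)
  qed
qed

lemma nn_integral_alpha_density:
  assumes k: "ka = kb + kc" and t: "t > 0"
  shows "(\<integral>\<^sup>+\<alpha>. ennreal (indicator {1 / t<..} \<alpha> * alpha_density ka kb t \<alpha>) \<partial>lborel)
       = ennreal (t_density kc t) * alpha_integral ka kb"
proof -
  define m where "m = t + 1 / t"
  have m: "m > 0"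
    unfolding m_def using t by (simp add: add_pos_pos)
  have "ennreal m * ennreal (indicator {1 / t<..} (1 / t + m * v) * alpha_density ka kb t (1 / t + m * v))
      = ennreal (t_density kc t) *
        ennreal (indicator {0<..} v * (2 * v + 1) powr (- ka) * (v * (v + 1)) powr ((kb - 2) / 2))" for v
  proof (cases "v > 0")
    case True
    then show ?thesis
      using m alpha_density_affine[OF k t True] alpha_density_nonneg[of ka kb t] t_density_nonneg[of kc t]
      by (simp add: m_def indicator_def ennreal_mult[symmetric] mult.assoc)
  next
    case False
    then have "\<not> 1 / t < 1 / t + m * v"
      using m by (simp add: zero_less_mult_iff)
    then show ?thesis
      using False by (simp add: indicator_def)
  qed
  then have "ennreal m * (\<integral>\<^sup>+v. ennreal (indicator {1 / t<..} (1 / t + m * v)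
        * alpha_density ka kb t (1 / t + m * v)) \<partial>lborel)
      = ennreal (t_density kc t) * alpha_integral ka kb"
    unfolding alpha_integral_def alpha_density_def
    by (simp add: nn_integral_cmult[symmetric])
  then show ?thesis
    using m by (subst nn_integral_real_affine[where c = m and t = "1 / t"]) (simp_all add: alpha_density_def)
qed

lemma alpha_density_factor:
  assumes "\<alpha> > 0" and "2 * \<alpha> + t - 1 / t > 0"
  shows "(\<alpha> * (2 * \<alpha> + t - 1 / t)) powr (- ka)
      * (\<alpha> powr ka * (((\<alpha> - 1 / t) * (\<alpha> + t)) powr ((kb - 2) / 2) * (1 + 1 / t^2)))
    = alpha_density ka kb t \<alpha>"
proof -
  have "(\<alpha> * (2 * \<alpha> + t - 1 / t)) powr (- ka) * \<alpha> powr ka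
      = (\<alpha> powr (- ka) * \<alpha> powr ka) * (2 * \<alpha> + t - 1 / t) powr (- ka)"
    using assms by (simp add: powr_mult mult_ac)
  also have "\<alpha> powr (- ka) * \<alpha> powr ka = 1"
    using assms by (simp add: powr_add[symmetric])
  finally have "(\<alpha> * (2 * \<alpha> + t - 1 / t)) powr (- ka) * \<alpha> powr ka = (2 * \<alpha> + t - 1 / t) powr (- ka)"
    by simp
  then show ?thesis
    unfolding alpha_density_def by (metis mult.assoc)
qed

lemma nn_integral_param_density_over_c:
  assumes k: "ka = kb + kc" "kb > 0" "kc > 0" and t: "t > 0"
  shows "(\<integral>\<^sup>+c. ennreal (c * param_density ka kb kc (c * \<alpha>) c t) \<partial>lborel)
       = ennreal (indicator {1 / t<..} \<alpha> * alpha_density ka kb t \<alpha>)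
         * (ennreal (1 / (2 * chi_const ka * chi_const kb * chi_const kc)) * gauss_moment (2 * ka))"
proof (cases "\<alpha> > 1 / t")
  case False
  have vanish: "c * param_density ka kb kc (c * \<alpha>) c t = 0" for c
  proof (cases "c > 0 \<and> \<alpha> > 0")
    case True
    then have "\<not> t > c / (c * \<alpha>)"
      using False t by (simp add: field_simps)
    then show ?thesis
      by (simp add: param_density_def)
  qed (auto simp: param_density_def zero_less_mult_iff)
  show ?thesis
    using False by (simp add: vanish)
next
  case True
  have \<alpha>_pos: "\<alpha> > 0"
    using True t by (smt (verit) divide_pos_pos)
  define q where "q = 2 * \<alpha> + t - 1 / t"
  have q: "q > 0"
    unfolding q_def using True t \<alpha>_pos by linarith
  then have Q: "\<alpha> * q > 0"
    using \<alpha>_pos by simp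
  define Z where "Z = 2 * chi_const ka * chi_const kb * chi_const kc"
  have Z: "Z > 0"
    unfolding Z_def using k chi_const_pos by simp
  define R where "R = ((\<alpha> - 1 / t) * (\<alpha> + t)) powr ((kb - 2) / 2) * (1 + 1 / t^2)"
  define \<psi> where "\<psi> = \<alpha> powr ka * R / Z"
  have \<psi>: "\<psi> \<ge> 0"
    unfolding \<psi>_def R_def using Z by (auto intro!: divide_nonneg_pos mult_nonneg_nonneg add_nonneg_nonneg)
  have "(\<alpha> * q) powr (- ka) * \<psi> = alpha_density ka kb t \<alpha> / Z"
    using alpha_density_factor[OF \<alpha>_pos q[unfolded q_def], of ka kb]
    unfolding \<psi>_def R_def q_def by (simp add: mult.assoc)
  then have "ennreal ((\<alpha> * q) powr (- ka)) * ennreal \<psi> = ennreal (alpha_density ka kb t \<alpha>) * ennreal (1 / Z)"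
    using \<psi> Z alpha_density_nonneg[of ka kb t \<alpha>] by (simp add: ennreal_mult[symmetric])
  then have scale: "ennreal ((\<alpha> * q) powr (- ka)) * gauss_moment (2 * ka) * ennreal \<psi>
      = ennreal (alpha_density ka kb t \<alpha>) * (ennreal (1 / Z) * gauss_moment (2 * ka))"
    by (metis mult.assoc mult.commute)
  have pointwise: "ennreal (c * param_density ka kb kc (c * \<alpha>) c t)
      = ennreal (indicator {0<..} c * c powr (2 * ka - 1) * exp (- (c^2 * (\<alpha> * q)) / 2)) * ennreal \<psi>" for c
  proof (cases "c > 0")
    case True
    then have "ennreal (indicator {0<..} c * c powr (2 * ka - 1) * exp (- (c^2 * (\<alpha> * q)) / 2)) * ennreal \<psi>
        = ennreal (c powr (2 * ka - 1) * exp (- (c^2 * (\<alpha> * q)) / 2) * \<psi>)"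
      using \<psi> by (simp add: ennreal_mult)
    also have "\<dots> = ennreal (c * param_density ka kb kc (c * \<alpha>) c t)"
      using param_density_scaled[OF k t True \<open>\<alpha> > 1 / t\<close>] by (simp add: \<psi>_def R_def Z_def q_def mult.assoc)
    finally show ?thesis ..
  qed (simp add: param_density_def)
  have "(\<integral>\<^sup>+c. ennreal (c * param_density ka kb kc (c * \<alpha>) c t) \<partial>lborel)
      = (\<integral>\<^sup>+c. ennreal (indicator {0<..} c * c powr (2 * ka - 1)
          * exp (- (c^2 * (\<alpha> * q)) / 2)) * ennreal \<psi> \<partial>lborel)"
    by (simp add: pointwise)
  also have "\<dots> = (\<integral>\<^sup>+c. ennreal (indicator {0<..} c * c powr (2 * ka - 1)
      * exp (- (c^2 * (\<alpha> * q)) / 2)) \<partial>lborel) * ennreal \<psi>"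
    by (rule nn_integral_multc) measurable
  also have "\<dots> = ennreal (indicator {1 / t<..} \<alpha> * alpha_density ka kb t \<alpha>)
      * (ennreal (1 / Z) * gauss_moment (2 * ka))"
    using nn_integral_gauss_moment_scaled[OF Q, of "2 * ka"] scale True by simp
  finally show ?thesis
    unfolding Z_def .
qed

definition param_const :: "real \<Rightarrow> real \<Rightarrow> real \<Rightarrow> ennreal" where
  "param_const ka kb kc = alpha_integral ka kb
     * (ennreal (1 / (2 * chi_const ka * chi_const kb * chi_const kc)) * gauss_moment (2 * ka))"

lemma nn_integral_param_density:
  assumes k: "ka = kb + kc" "kb > 0" "kc > 0"
  shows "(\<integral>\<^sup>+c. (\<integral>\<^sup>+a. ennreal (param_density ka kb kc a c t) \<partial>lborel) \<partial>lborel)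
       = ennreal (indicator {0<..} t * t_density kc t) * param_const ka kb kc"
proof (cases "t > 0")
  case True
  have "(\<integral>\<^sup>+c. (\<integral>\<^sup>+a. ennreal (param_density ka kb kc a c t) \<partial>lborel) \<partial>lborel)
      = (\<integral>\<^sup>+c. (\<integral>\<^sup>+\<alpha>. ennreal (c * param_density ka kb kc (c * \<alpha>) c t) \<partial>lborel) \<partial>lborel)"
    using k by (simp add: nn_integral_param_density_over_a)
  also have "\<dots> = (\<integral>\<^sup>+\<alpha>. (\<integral>\<^sup>+c. ennreal (c * param_density ka kb kc (c * \<alpha>) c t) \<partial>lborel) \<partial>lborel)"
    by (rule lborel_pair.Fubini') measurable
  also have "\<dots> = (\<integral>\<^sup>+\<alpha>. ennreal (indicator {1 / t<..} \<alpha> * alpha_density ka kb t \<alpha>) \<partial>lborel)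
      * (ennreal (1 / (2 * chi_const ka * chi_const kb * chi_const kc)) * gauss_moment (2 * ka))"
    unfolding nn_integral_param_density_over_c[OF k True]
    by (rule nn_integral_multc) (unfold alpha_density_def, measurable)
  finally show ?thesis
    unfolding nn_integral_alpha_density[OF k(1) True] param_const_def using True by (simp add: mult.assoc)
next
  case False
  then have "param_density ka kb kc a c t = 0" for a c
    unfolding param_density_def by (smt (verit) divide_pos_pos)
  then show ?thesis
    using False by simp
qed

lemma nn_integral_cond_number_over_b_param_density:
  fixes G :: "real \<Rightarrow> ennreal"
  assumes G [measurable]: "G \<in> borel_measurable borel" and "x \<noteq> 0"
    and k: "ka > 0" "kb > 0" "kc > 0"
  shows "(\<integral>\<^sup>+b. G (cond_number (Mmat x (-x) a b c))
            * ennreal (chi_density ka a * chi_density kc c * chi_density kb b) \<partial>lborel)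
       = (\<integral>\<^sup>+t. G (cond_of_param t) * ennreal (param_density ka kb kc a c t) \<partial>lborel)"
proof (cases "a > 0 \<and> c > 0")
  case True
  then have a: "a > 0" and c: "c > 0"
    by auto
  define C where "C = chi_density ka a * chi_density kc c"
  have C: "C \<ge> 0"
    unfolding C_def using k by (simp add: chi_density_nonneg)
  have "(\<integral>\<^sup>+b. G (cond_number (Mmat x (-x) a b c)) * ennreal (C * chi_density kb b) \<partial>lborel)
      = ennreal C * (\<integral>\<^sup>+b. G (cond_number (Mmat x (-x) a b c)) * ennreal (chi_density kb b) \<partial>lborel)"
    using C k by (subst nn_integral_cmult[symmetric]) (auto intro!: nn_integral_cong
        simp: ennreal_mult chi_density_nonneg mult_ac)
  also have "\<dots> = ennreal C * (\<integral>\<^sup>+t. G (cond_of_param t)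
      * ennreal (chi_density kb (b_of_param a c t) * b_of_param_deriv a c t) * indicator {c / a<..} t \<partial>lborel)"
    unfolding nn_integral_cond_number_over_b[OF G \<open>x \<noteq> 0\<close> a c k(2)] ..
  also have "\<dots> = (\<integral>\<^sup>+t. G (cond_of_param t) * ennreal (param_density ka kb kc a c t) \<partial>lborel)"
    using C a c k b_of_param_deriv_nonneg[OF a c]
    by (subst nn_integral_cmult[symmetric])
       (auto intro!: nn_integral_cong simp: C_def param_density_def indicator_def ennreal_mult[symmetric]
         chi_density_nonneg mult_ac, unfold b_of_param_def b_of_param_deriv_def, measurable)
  finally show ?thesis
    unfolding C_def by (simp add: mult.assoc)
next
  case False
  then show ?thesis
    by (auto simp: chi_density_def param_density_def)
qed

lemma nn_integral_cond_number_chi: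
  fixes G :: "real \<Rightarrow> ennreal"
  assumes G [measurable]: "G \<in> borel_measurable borel" and "x \<noteq> 0"
    and k: "ka = kb + kc" "kb > 0" "kc > 0"
  shows "(\<integral>\<^sup>+a. (\<integral>\<^sup>+b. (\<integral>\<^sup>+c. G (cond_number (Mmat x (-x) a b c))
            * (ennreal (chi_density ka a) * (ennreal (chi_density kb b) * ennreal (chi_density kc c)))
            \<partial>lborel) \<partial>lborel) \<partial>lborel)
       = (\<integral>\<^sup>+t. G (cond_of_param t) * ennreal (indicator {0<..} t * t_density kc t) \<partial>lborel)
          * param_const ka kb kc"
proof -
  have kpos: "ka > 0"
    using k by simp
  let ?P = "\<lambda>a c t. G (cond_of_param t) * ennreal (param_density ka kb kc a c t)"
  have "(\<integral>\<^sup>+a. (\<integral>\<^sup>+b. (\<integral>\<^sup>+c. G (cond_number (Mmat x (-x) a b c))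
            * (ennreal (chi_density ka a) * (ennreal (chi_density kb b) * ennreal (chi_density kc c)))
            \<partial>lborel) \<partial>lborel) \<partial>lborel)
      = (\<integral>\<^sup>+a. (\<integral>\<^sup>+c. (\<integral>\<^sup>+b. G (cond_number (Mmat x (-x) a b c))
            * ennreal (chi_density ka a * chi_density kc c * chi_density kb b) \<partial>lborel) \<partial>lborel) \<partial>lborel)"
    using k kpos
    by (intro nn_integral_cong lborel_pair.Fubini'[THEN trans])
       (auto intro!: nn_integral_cong simp: ennreal_mult chi_density_nonneg mult_ac)
  also have "\<dots> = (\<integral>\<^sup>+a. (\<integral>\<^sup>+c. (\<integral>\<^sup>+t. ?P a c t \<partial>lborel) \<partial>lborel) \<partial>lborel)"
    using nn_integral_cond_number_over_b_param_density[OF G \<open>x \<noteq> 0\<close> kpos k(2,3)] by simp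
  also have "\<dots> = (\<integral>\<^sup>+t. (\<integral>\<^sup>+c. (\<integral>\<^sup>+a. ?P a c t \<partial>lborel) \<partial>lborel) \<partial>lborel)"
  proof -
    have "(\<integral>\<^sup>+a. (\<integral>\<^sup>+c. (\<integral>\<^sup>+t. ?P a c t \<partial>lborel) \<partial>lborel) \<partial>lborel)
        = (\<integral>\<^sup>+a. (\<integral>\<^sup>+t. (\<integral>\<^sup>+c. ?P a c t \<partial>lborel) \<partial>lborel) \<partial>lborel)"
      by (intro nn_integral_cong lborel_pair.Fubini') measurable
    also have "\<dots> = (\<integral>\<^sup>+t. (\<integral>\<^sup>+a. (\<integral>\<^sup>+c. ?P a c t \<partial>lborel) \<partial>lborel) \<partial>lborel)"
      by (rule lborel_pair.Fubini'[symmetric]) measurable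
    also have "\<dots> = (\<integral>\<^sup>+t. (\<integral>\<^sup>+c. (\<integral>\<^sup>+a. ?P a c t \<partial>lborel) \<partial>lborel) \<partial>lborel)"
      by (intro nn_integral_cong lborel_pair.Fubini'[symmetric]) measurable
    finally show ?thesis .
  qed
  also have "\<dots> = (\<integral>\<^sup>+t. G (cond_of_param t) * ennreal (indicator {0<..} t * t_density kc t)
      * param_const ka kb kc \<partial>lborel)"
    by (simp add: nn_integral_cmult nn_integral_param_density[OF k] mult.assoc)
  also have "\<dots> = (\<integral>\<^sup>+t. G (cond_of_param t) * ennreal (indicator {0<..} t * t_density kc t) \<partial>lborel)
      * param_const ka kb kc"
    by (rule nn_integral_multc) measurable
  finally show ?thesis .
qed

section \<open>The density of the condition number\<close>

definition cond_density :: "real \<Rightarrow> real \<Rightarrow> real" where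
  "cond_density k s = s powr (k / 2 - 1) * (1 + s) powr (- k)"

lemma cond_density_nonneg: "cond_density k s \<ge> 0"
  unfolding cond_density_def by simp

lemma borel_measurable_cond_density [measurable]: "cond_density k \<in> borel_measurable borel"
  unfolding cond_density_def by measurable

lemma cond_of_param_gt_1:
  assumes "t > 1"
  shows "cond_of_param t = t^2"
proof -
  have "1 < t^2"
    using assms by (simp add: one_less_power)
  then have "1 / t^2 < t^2"
    by (smt (verit) divide_less_eq_1_pos)
  then show ?thesis
    unfolding cond_of_param_def by simp
qed

lemma cond_of_param_lt_1:
  assumes "0 < t" and "t < 1"
  shows "cond_of_param t = 1 / t^2"
proof -
  have "0 < t^2" and "t^2 < 1"
    using assms by (simp_all add: power_less_one_iff)
  then have "t^2 < 1 / t^2"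
    by (smt (verit) less_divide_eq_1_pos)
  then show ?thesis
    unfolding cond_of_param_def by simp
qed

lemma cond_density_sq:
  assumes t: "t > 0"
  shows "cond_density k (t^2) * (2 * t) = 2 * t_density k t"
  unfolding cond_density_def t_density_def
proof (rule ln_inj_iff[THEN iffD1])
  have t1: "1 + t^2 > 0"
    by (simp add: add_pos_nonneg)
  show "0 < (t^2) powr (k / 2 - 1) * (1 + t^2) powr - k * (2 * t)"
    using t t1 by simp
  show "0 < 2 * (t powr (k - 1) * (1 + t^2) powr - k)"
    using t t1 by simp
  have "ln (t^2) = 2 * ln t"
    using t by (simp add: ln_realpow)
  then show "ln ((t^2) powr (k / 2 - 1) * (1 + t^2) powr - k * (2 * t))
      = ln (2 * (t powr (k - 1) * (1 + t^2) powr - k))"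
    using t t1 by (simp add: ln_mult) (simp add: algebra_simps)
qed

lemma cond_density_inverse_sq:
  assumes t: "t > 0"
  shows "cond_density k (1 / t^2) * (2 / t^3) = 2 * t_density k t"
  unfolding cond_density_def t_density_def
proof (rule ln_inj_iff[THEN iffD1])
  have t1: "1 + t^2 > 0" and t2: "1 + 1 / t^2 > 0"
    by (simp_all add: add_pos_nonneg)
  show "0 < (1 / t^2) powr (k / 2 - 1) * (1 + 1 / t^2) powr - k * (2 / t^3)"
    using t t2 by (intro mult_pos_pos divide_pos_pos) auto
  show "0 < 2 * (t powr (k - 1) * (1 + t^2) powr - k)"
    using t t1 by simp
  have ln_pow: "ln (t^2) = 2 * ln t" "ln (t^3) = 3 * ln t"
    using t by (simp_all add: ln_realpow)
  have "1 + 1 / t^2 = (1 + t^2) / t^2"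
    using t by (simp add: field_simps)
  then have "ln (1 + 1 / t^2) = ln (1 + t^2) - 2 * ln t"
    using t t1 ln_pow by (simp add: ln_div)
  then show "ln ((1 / t^2) powr (k / 2 - 1) * (1 + 1 / t^2) powr - k * (2 / t^3))
      = ln (2 * (t powr (k - 1) * (1 + t^2) powr - k))"
    using t t1 t2 ln_pow by (simp add: ln_mult ln_div) (simp add: algebra_simps)
qed

lemma image_sq_Ioi: "(\<lambda>t. t^2) ` {1<..} = ({1<..} :: real set)"
proof (intro equalityI subsetI)
  fix y :: real
  assume "y \<in> {1<..}"
  then show "y \<in> (\<lambda>t. t^2) ` {1<..}"
    by (intro image_eqI[of _ _ "sqrt y"]) auto
qed (auto simp: one_less_power)

lemma image_inverse_sq_Ioo: "(\<lambda>t. 1 / t^2) ` {0<..<1} = ({1<..} :: real set)"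
proof (intro equalityI subsetI)
  fix y :: real
  assume "y \<in> (\<lambda>t. 1 / t^2) ` {0<..<1}"
  then obtain t :: real where "0 < t" "t < 1" "y = 1 / t^2"
    by auto
  then show "y \<in> {1<..}"
    by (simp add: power_less_one_iff)
next
  fix y :: real
  assume "y \<in> {1<..}"
  then show "y \<in> (\<lambda>t. 1 / t^2) ` {0<..<1}"
    by (intro image_eqI[of _ _ "1 / sqrt y"]) (auto simp: field_simps)
qed

lemma nn_integral_cond_density_upper:
  fixes G :: "real \<Rightarrow> ennreal"
  assumes [measurable]: "G \<in> borel_measurable borel"
  shows "(\<integral>\<^sup>+s. G s * ennreal (indicator {1<..} s * cond_density k s) \<partial>lborel)
       = 2 * (\<integral>\<^sup>+t. G (cond_of_param t) * ennreal (indicator {1<..} t * t_density k t) \<partial>lborel)"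
proof -
  define F where "F s = G s * ennreal (cond_density k s)" for s
  have [measurable]: "F \<in> borel_measurable borel"
    unfolding F_def by measurable
  have "(\<integral>\<^sup>+s. G s * ennreal (indicator {1<..} s * cond_density k s) \<partial>lborel)
      = (\<integral>\<^sup>+s. F s * indicator ((\<lambda>t. t^2) ` einterval (ereal 1) \<infinity>) s \<partial>lborel)"
    unfolding F_def by (intro nn_integral_cong) (simp add: image_sq_Ioi indicator_def)
  also have "\<dots> = (\<integral>\<^sup>+t. F (t^2) * ennreal (2 * t) * indicator (einterval (ereal 1) \<infinity>) t \<partial>lborel)"
    by (rule nn_integral_substitution_einterval) (auto intro!: derivative_eq_intros continuous_intros)
  also have "\<dots> = (\<integral>\<^sup>+t. 2 * (G (cond_of_param t) * ennreal (indicator {1<..} t * t_density k t)) \<partial>lborel)"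
  proof (rule nn_integral_cong)
    fix t :: real
    show "F (t^2) * ennreal (2 * t) * indicator (einterval (ereal 1) \<infinity>) t
        = 2 * (G (cond_of_param t) * ennreal (indicator {1<..} t * t_density k t))"
    proof (cases "t > 1")
      case True
      then have "ennreal (cond_density k (t^2)) * ennreal (2 * t) = ennreal (cond_density k (t^2) * (2 * t))"
        using cond_density_nonneg[of k "t^2"] by (simp add: ennreal_mult)
      also have "\<dots> = ennreal 2 * ennreal (t_density k t)"
        using True by (simp add: cond_density_sq ennreal_mult t_density_nonneg)
      finally have jacobian: "ennreal (cond_density k (t^2)) * ennreal (2 * t) = 2 * ennreal (t_density k t)"
        by simp
      have "F (t^2) * ennreal (2 * t) * indicator (einterval (ereal 1) \<infinity>) t
          = G (t^2) * (ennreal (cond_density k (t^2)) * ennreal (2 * t))"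
        using True by (simp add: F_def mult.assoc)
      also have "\<dots> = 2 * (G (cond_of_param t) * ennreal (indicator {1<..} t * t_density k t))"
        unfolding jacobian using True by (simp add: cond_of_param_gt_1 mult_ac)
      finally show ?thesis .
    qed simp
  qed
  also have "\<dots> = 2 * (\<integral>\<^sup>+t. G (cond_of_param t) * ennreal (indicator {1<..} t * t_density k t) \<partial>lborel)"
    by (rule nn_integral_cmult) measurable
  finally show ?thesis .
qed

lemma nn_integral_cond_density_lower:
  fixes G :: "real \<Rightarrow> ennreal"
  assumes [measurable]: "G \<in> borel_measurable borel"
  shows "(\<integral>\<^sup>+s. G s * ennreal (indicator {1<..} s * cond_density k s) \<partial>lborel)
       = 2 * (\<integral>\<^sup>+t. G (cond_of_param t) * ennreal (indicator {0<..<1} t * t_density k t) \<partial>lborel)"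
proof -
  define F where "F s = G s * ennreal (cond_density k s)" for s
  have [measurable]: "F \<in> borel_measurable borel"
    unfolding F_def by measurable
  have "(\<integral>\<^sup>+s. G s * ennreal (indicator {1<..} s * cond_density k s) \<partial>lborel)
      = (\<integral>\<^sup>+s. F s * indicator ((\<lambda>t. 1 / t^2) ` einterval (ereal 0) (ereal 1)) s \<partial>lborel)"
    unfolding F_def by (intro nn_integral_cong) (simp add: image_inverse_sq_Ioo indicator_def)
  also have "\<dots> = (\<integral>\<^sup>+t. F (1 / t^2) * ennreal (- (- 2 / t^3)) * indicator (einterval (ereal 0) (ereal 1)) t \<partial>lborel)"
  proof (rule nn_integral_substitution_einterval_antimono)
    show "((\<lambda>t. 1 / t^2) has_real_derivative - 2 / t^3) (at t)" if "t \<in> einterval (ereal 0) (ereal 1)" for t :: real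
      using that by (auto intro!: derivative_eq_intros simp: power2_eq_square power3_eq_cube field_simps)
  qed (auto intro!: continuous_intros)
  also have "\<dots> = (\<integral>\<^sup>+t. 2 * (G (cond_of_param t) * ennreal (indicator {0<..<1} t * t_density k t)) \<partial>lborel)"
  proof (rule nn_integral_cong)
    fix t :: real
    show "F (1 / t^2) * ennreal (- (- 2 / t^3)) * indicator (einterval (ereal 0) (ereal 1)) t
        = 2 * (G (cond_of_param t) * ennreal (indicator {0<..<1} t * t_density k t))"
    proof (cases "t \<in> {0<..<1}")
      case True
      then have "ennreal (cond_density k (1 / t^2)) * ennreal (2 / t^3)
          = ennreal (cond_density k (1 / t^2) * (2 / t^3))"
        using True cond_density_nonneg[of k "1 / t^2"] by (intro ennreal_mult[symmetric]) auto
      also have "\<dots> = ennreal 2 * ennreal (t_density k t)"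
        using True cond_density_inverse_sq[of t k] by (simp add: ennreal_mult t_density_nonneg)
      finally have jacobian: "ennreal (cond_density k (1 / t^2)) * ennreal (2 / t^3) = 2 * ennreal (t_density k t)"
        by simp
      have "F (1 / t^2) * ennreal (- (- 2 / t^3)) * indicator (einterval (ereal 0) (ereal 1)) t
          = G (1 / t^2) * (ennreal (cond_density k (1 / t^2)) * ennreal (2 / t^3))"
        using True by (simp add: F_def mult.assoc)
      also have "\<dots> = 2 * (G (cond_of_param t) * ennreal (indicator {0<..<1} t * t_density k t))"
        unfolding jacobian using True by (simp add: cond_of_param_lt_1 mult_ac)
      finally show ?thesis .
    qed auto
  qed
  also have "\<dots> = 2 * (\<integral>\<^sup>+t. G (cond_of_param t) * ennreal (indicator {0<..<1} t * t_density k t) \<partial>lborel)"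
    by (rule nn_integral_cmult) measurable
  finally show ?thesis .
qed

text \<open>Both \<open>s = t\<^sup>2\<close> on \<open>t > 1\<close> and \<open>s = t\<^sup>-\<^sup>2\<close> on \<open>0 < t < 1\<close> map onto \<open>s > 1\<close> and
  carry \<open>t\<^sup>k\<^sup>-\<^sup>1 (1 + t\<^sup>2)\<^sup>-\<^sup>k dt\<close> to the same measure, so the two halves of the \<open>t\<close>-integral agree.\<close>

lemma nn_integral_cond_of_param_t_density:
  fixes G :: "real \<Rightarrow> ennreal"
  assumes [measurable]: "G \<in> borel_measurable borel"
  shows "(\<integral>\<^sup>+t. G (cond_of_param t) * ennreal (indicator {0<..} t * t_density k t) \<partial>lborel)
       = (\<integral>\<^sup>+s. G s * ennreal (indicator {1<..} s * cond_density k s) \<partial>lborel)"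
proof -
  define upper where
    "upper = (\<integral>\<^sup>+t. G (cond_of_param t) * ennreal (indicator {1<..} t * t_density k t) \<partial>lborel)"
  define lower where
    "lower = (\<integral>\<^sup>+t. G (cond_of_param t) * ennreal (indicator {0<..<1} t * t_density k t) \<partial>lborel)"
  have "2 * lower = 2 * upper"
    unfolding lower_def upper_def
    using nn_integral_cond_density_lower[of G k] nn_integral_cond_density_upper[of G k] by simp
  then have "lower = upper"
    by (subst (asm) ennreal_mult_cancel_left) auto
  have "AE t in lborel. G (cond_of_param t) * ennreal (indicator {0<..} t * t_density k t)
      = G (cond_of_param t) * ennreal (indicator {0<..<1} t * t_density k t)
        + G (cond_of_param t) * ennreal (indicator {1<..} t * t_density k t)"
    using AE_lborel_singleton[of 1] by eventually_elim (auto simp: indicator_def)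
  then have "(\<integral>\<^sup>+t. G (cond_of_param t) * ennreal (indicator {0<..} t * t_density k t) \<partial>lborel)
      = lower + upper"
    unfolding lower_def upper_def
    by (subst nn_integral_add[symmetric]) (auto intro!: nn_integral_cong_AE)
  also have "\<dots> = 2 * upper"
    using \<open>lower = upper\<close> by (simp add: mult_2)
  finally show ?thesis
    using nn_integral_cond_density_upper[of G k] unfolding upper_def by simp
qed

lemma beta_integrand_substitution:
  assumes t: "t > 0"
  shows "(t^2 / (1 + t^2)) powr (k / 2 - 1) * (1 - t^2 / (1 + t^2)) powr (k / 2 - 1) * (2 * t / (1 + t^2)^2)
       = 2 * t_density k t"
proof -
  have t1: "1 + t^2 > 0"
    by (simp add: add_pos_nonneg)
  have one_minus: "1 - t^2 / (1 + t^2) = 1 / (1 + t^2)"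
    using t1 by (simp add: field_simps)
  show ?thesis
    unfolding one_minus t_density_def
  proof (rule ln_inj_iff[THEN iffD1])
    show "0 < (t^2 / (1 + t^2)) powr (k / 2 - 1) * (1 / (1 + t^2)) powr (k / 2 - 1) * (2 * t / (1 + t^2)^2)"
      using t t1 by simp
    show "0 < 2 * (t powr (k - 1) * (1 + t^2) powr - k)"
      using t t1 by simp
    have "ln (t^2) = 2 * ln t" "ln ((1 + t^2)^2) = 2 * ln (1 + t^2)"
      using t t1 by (simp_all add: ln_realpow)
    then show "ln ((t^2 / (1 + t^2)) powr (k / 2 - 1) * (1 / (1 + t^2)) powr (k / 2 - 1)
        * (2 * t / (1 + t^2)^2)) = ln (2 * (t powr (k - 1) * (1 + t^2) powr - k))"
      using t t1 by (simp add: ln_mult ln_div) (simp add: algebra_simps)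
  qed
qed

lemma image_sq_div_one_plus_sq: "(\<lambda>t::real. t^2 / (1 + t^2)) ` {0<..} = {0<..<1}"
proof (intro equalityI subsetI)
  have pos: "1 + t^2 > 0" for t :: real
    by (simp add: add_pos_nonneg)
  fix y
  assume "y \<in> (\<lambda>t::real. t^2 / (1 + t^2)) ` {0<..}"
  then obtain t :: real where "t > 0" "y = t^2 / (1 + t^2)"
    by auto
  then show "y \<in> {0<..<1}"
    using pos[of t] by (simp add: divide_less_eq)
next
  fix y :: real
  assume y: "y \<in> {0<..<1}"
  define t where "t = sqrt (y / (1 - y))"
  have "t^2 = y / (1 - y)"
    unfolding t_def using y by simp
  then have "t^2 = y * (1 + t^2)"
    using y by (simp add: field_simps)
  then have "t^2 / (1 + t^2) = y"
    using add_pos_nonneg[of 1 "t^2"] by (simp add: divide_eq_eq)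
  moreover have "t > 0"
    unfolding t_def using y by simp
  ultimately show "y \<in> (\<lambda>t::real. t^2 / (1 + t^2)) ` {0<..}"
    by force
qed

lemma nn_integral_t_density:
  assumes "k > 0"
  shows "2 * (\<integral>\<^sup>+t. ennreal (indicator {0<..} t * t_density k t) \<partial>lborel) = ennreal (Beta (k / 2) (k / 2))"
proof -
  define F where "F u = ennreal (u powr (k / 2 - 1) * (1 - u) powr (k / 2 - 1))" for u :: real
  have [measurable]: "F \<in> borel_measurable borel"
    unfolding F_def by measurable
  define g where "g t = t^2 / (1 + t^2)" for t :: real
  define g' where "g' t = 2 * t / (1 + t^2)^2" for t :: real
  have pos: "1 + t^2 > 0" for t :: real
    by (simp add: add_pos_nonneg)
  have image: "g ` einterval (ereal 0) \<infinity> = {0<..<1}"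
    unfolding g_def[abs_def] by (simp add: image_sq_div_one_plus_sq)
  have "ennreal (Beta (k / 2) (k / 2))
      = (\<integral>\<^sup>+u. ennreal (indicator {0<..<1} u * (u powr (k / 2 - 1) * (1 - u) powr (k / 2 - 1))) \<partial>lborel)"
  proof (rule nn_integral_has_integral_lebesgue[symmetric])
    show "((\<lambda>u. u powr (k / 2 - 1) * (1 - u) powr (k / 2 - 1)) has_integral Beta (k / 2) (k / 2)) {0<..<1}"
      using has_integral_Beta_real[of "k / 2" "k / 2"] \<open>k > 0\<close> by (simp add: has_integral_Icc_iff_Ioo)
  qed simp
  also have "\<dots> = (\<integral>\<^sup>+u. F u * indicator (g ` einterval (ereal 0) \<infinity>) u \<partial>lborel)"
    unfolding image F_def by (intro nn_integral_cong) (simp add: indicator_def)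
  also have "\<dots> = (\<integral>\<^sup>+t. F (g t) * ennreal (g' t) * indicator (einterval (ereal 0) \<infinity>) t \<partial>lborel)"
  proof (rule nn_integral_substitution_einterval)
    show "(g has_real_derivative g' t) (at t)" for t
      unfolding g_def[abs_def] g'_def using pos[of t]
      by (auto intro!: derivative_eq_intros simp: power2_eq_square field_simps)
    show "continuous_on (einterval (ereal 0) \<infinity>) g'"
      unfolding g'_def[abs_def] using pos by (intro continuous_intros) (simp add: less_imp_neq[symmetric])
  qed (auto simp: g'_def)
  also have "\<dots> = (\<integral>\<^sup>+t. 2 * ennreal (indicator {0<..} t * t_density k t) \<partial>lborel)"
  proof (rule nn_integral_cong)
    fix t :: real
    show "F (g t) * ennreal (g' t) * indicator (einterval (ereal 0) \<infinity>) t
        = 2 * ennreal (indicator {0<..} t * t_density k t)"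
    proof (cases "t > 0")
      case True
      have "F (g t) * ennreal (g' t) = ennreal (2 * t_density k t)"
        unfolding F_def g_def g'_def using True beta_integrand_substitution[OF True, of k]
        by (simp add: ennreal_mult[symmetric])
      then show ?thesis
        using True t_density_nonneg[of k t] by (simp add: ennreal_mult)
    qed simp
  qed
  also have "\<dots> = 2 * (\<integral>\<^sup>+t. ennreal (indicator {0<..} t * t_density k t) \<partial>lborel)"
    by (rule nn_integral_cmult) measurable
  finally show ?thesis ..
qed

lemma nn_integral_cond_density:
  assumes "k > 0"
  shows "(\<integral>\<^sup>+s. ennreal (indicator {1<..} s * cond_density k s) \<partial>lborel)
    = ennreal (Beta (k / 2) (k / 2) / 2)"
proof -
  have "Beta (k / 2) (k / 2) > 0"
    using assms by (simp add: Beta_def)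
  then have "ennreal (Beta (k / 2) (k / 2)) = ennreal 2 * ennreal (Beta (k / 2) (k / 2) / 2)"
    by (subst ennreal_mult[symmetric]) auto
  then show ?thesis
    using nn_integral_t_density[OF assms] nn_integral_cond_of_param_t_density[of "\<lambda>_. 1" k]
    by (simp add: ennreal_mult_cancel_left)
qed

lemma f_kappa_eq_cond_density:
  assumes "L \<ge> 2" and "\<beta> > 0"
  shows "f_kappa L \<beta> \<sigma> = 2 / Beta (\<beta> * (real L - 1) / 2) (\<beta> * (real L - 1) / 2)
    * cond_density (\<beta> * (real L - 1)) \<sigma>"
proof -
  define k where "k = \<beta> * (real L - 1)"
  have k: "k > 0"
    unfolding k_def using assms by simp
  have "\<beta> * real L / 2 - \<beta> / 2 - 1 = k / 2 - 1" and "\<beta> * real L - \<beta> + 1 = k + 1"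
    and "- \<beta> * (real L - 1) = - k" and "\<beta> / 2 * (real L - 1) = k / 2"
    unfolding k_def by (simp_all add: algebra_simps)
  moreover have "Gamma (k + 1) = k * Gamma k"
    using k by (intro Gamma_plus1) (auto elim!: nonpos_Ints_cases)
  moreover have "Gamma (k / 2) > 0" "Gamma k > 0"
    using k by auto
  ultimately show ?thesis
    unfolding f_kappa_def k_def[symmetric] Beta_def cond_density_def using k
    by (simp add: field_simps power2_eq_square add.commute)
qed

lemma f_kappa_2_1:
  assumes "\<sigma> > 0"
  shows "f_kappa 2 1 \<sigma> = 2 / (pi * sqrt \<sigma> * (\<sigma> + 1))"
proof -
  have "\<sigma> powr - (1 / 2) = 1 / sqrt \<sigma>" and "(\<sigma> + 1) powr (- 1) = 1 / (\<sigma> + 1)"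
    using assms by (simp_all add: powr_minus_divide powr_half_sqrt)
  moreover have "Gamma (2::real) = 1"
    using Gamma_fact[of 1] by simp
  ultimately show ?thesis
    unfolding f_kappa_def using assms by (simp add: Gamma_one_half_real)
qed

section \<open>The distribution of the condition number\<close>

lemma (in prob_space) distr_indep_triple:
  fixes X Y Z :: "'a \<Rightarrow> real"
  assumes indep: "indep_vars (\<lambda>_. borel) (\<lambda>i. [X, Y, Z] ! i) {0, 1, 2}"
    and [measurable]: "X \<in> borel_measurable M" "Y \<in> borel_measurable M" "Z \<in> borel_measurable M"
  shows "distr M lborel X \<Otimes>\<^sub>M distr M (lborel \<Otimes>\<^sub>M lborel) (\<lambda>\<omega>. (Y \<omega>, Z \<omega>))
      = distr M (lborel \<Otimes>\<^sub>M (lborel \<Otimes>\<^sub>M lborel)) (\<lambda>\<omega>. (X \<omega>, (Y \<omega>, Z \<omega>)))"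
proof (rule pair_measure_eqI)
  define V where "V = (\<lambda>i. [X, Y, Z] ! i)"
  have V: "V 0 = X" "V (Suc 0) = Y" "V 2 = Z"
    unfolding V_def by simp_all
  have indep_X_YZ: "indep_var (PiM {0} (\<lambda>_. borel)) (\<lambda>\<omega>. restrict (\<lambda>i. V i \<omega>) {0})
      (PiM {1, 2} (\<lambda>_. borel)) (\<lambda>\<omega>. restrict (\<lambda>i. V i \<omega>) {1, 2})"
    using indep unfolding V_def[symmetric] by (rule indep_var_restrict) auto
  show "sigma_finite_measure (distr M lborel X)"
    "sigma_finite_measure (distr M (lborel \<Otimes>\<^sub>M lborel) (\<lambda>\<omega>. (Y \<omega>, Z \<omega>)))"
    by (auto intro!: prob_space_imp_sigma_finite prob_space_distr simp: measurable_lborel2)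
  fix A B
  assume "A \<in> sets (distr M lborel X)" and "B \<in> sets (distr M (lborel \<Otimes>\<^sub>M lborel) (\<lambda>\<omega>. (Y \<omega>, Z \<omega>)))"
  then have A [measurable]: "A \<in> sets borel" and B [measurable]: "B \<in> sets (borel \<Otimes>\<^sub>M borel)"
    by simp_all
  define A' where "A' = (\<lambda>f. f 0) -` A \<inter> space (PiM {0::nat} (\<lambda>_. borel :: real measure))"
  define B' where "B' = (\<lambda>f. (f 1, f 2)) -` B \<inter> space (PiM {1::nat, 2} (\<lambda>_. borel :: real measure))"
  have A'_sets: "A' \<in> sets (PiM {0} (\<lambda>_. borel))" and B'_sets: "B' \<in> sets (PiM {1, 2} (\<lambda>_. borel))"
    unfolding A'_def B'_def by (auto intro!: measurable_sets[OF _ A] measurable_sets[OF _ B])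
  have "(\<lambda>\<omega>. restrict (\<lambda>i. V i \<omega>) {0}) -` A' \<inter> space M = X -` A \<inter> space M"
    and "(\<lambda>\<omega>. restrict (\<lambda>i. V i \<omega>) {1, 2}) -` B' \<inter> space M = (\<lambda>\<omega>. (Y \<omega>, Z \<omega>)) -` B \<inter> space M"
    and "(\<lambda>\<omega>. (restrict (\<lambda>i. V i \<omega>) {0}, restrict (\<lambda>i. V i \<omega>) {1, 2})) -` (A' \<times> B') \<inter> space M
      = (\<lambda>\<omega>. (X \<omega>, (Y \<omega>, Z \<omega>))) -` (A \<times> B) \<inter> space M"
    unfolding A'_def B'_def by (auto simp: V space_PiM PiE_def extensional_def)
  with indep_varD[OF indep_X_YZ A'_sets B'_sets] have "prob ((\<lambda>\<omega>. (X \<omega>, (Y \<omega>, Z \<omega>))) -` (A \<times> B) \<inter> space M)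
      = prob (X -` A \<inter> space M) * prob ((\<lambda>\<omega>. (Y \<omega>, Z \<omega>)) -` B \<inter> space M)"
    by simp
  then show "emeasure (distr M lborel X) A * emeasure (distr M (lborel \<Otimes>\<^sub>M lborel) (\<lambda>\<omega>. (Y \<omega>, Z \<omega>))) B
      = emeasure (distr M (lborel \<Otimes>\<^sub>M (lborel \<Otimes>\<^sub>M lborel)) (\<lambda>\<omega>. (X \<omega>, (Y \<omega>, Z \<omega>)))) (A \<times> B)"
    by (simp add: emeasure_distr emeasure_eq_measure ennreal_mult[symmetric] measurable_lborel2)
qed simp

lemma (in prob_space) distributed_indep_triple:
  fixes X Y Z :: "'a \<Rightarrow> real"
  assumes indep: "indep_vars (\<lambda>_. borel) (\<lambda>i. [X, Y, Z] ! i) {0, 1, 2}"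
    and X: "distributed M lborel X fX" and Y: "distributed M lborel Y fY"
    and Z: "distributed M lborel Z fZ"
  shows "distributed M (lborel \<Otimes>\<^sub>M (lborel \<Otimes>\<^sub>M lborel)) (\<lambda>\<omega>. (X \<omega>, (Y \<omega>, Z \<omega>)))
      (\<lambda>(x, (y, z)). fX x * (fY y * fZ z))"
proof -
  define V where "V = (\<lambda>i. [X, Y, Z] ! i)"
  have V: "V 0 = X" "V (Suc 0) = Y" "V 2 = Z"
    unfolding V_def by simp_all
  have [measurable]: "X \<in> borel_measurable M" "Y \<in> borel_measurable M" "Z \<in> borel_measurable M"
    using X Y Z by (auto dest!: distributed_measurable simp: measurable_lborel2)
  have indep_YZ: "indep_var lborel Y lborel Z"
  proof -
    have "indep_var lborel ((\<lambda>f. f 1) \<circ> (\<lambda>\<omega>. restrict (\<lambda>i. V i \<omega>) {1}))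
        lborel ((\<lambda>f. f 2) \<circ> (\<lambda>\<omega>. restrict (\<lambda>i. V i \<omega>) {2}))"
      using indep unfolding V_def[symmetric]
      by (intro indep_var_compose[OF indep_var_restrict]) (auto simp: measurable_lborel2)
    moreover have "(\<lambda>f. f 1) \<circ> (\<lambda>\<omega>. restrict (\<lambda>i. V i \<omega>) {1}) = Y"
      and "(\<lambda>f. f 2) \<circ> (\<lambda>\<omega>. restrict (\<lambda>i. V i \<omega>) {2}) = Z"
      by (auto simp: fun_eq_iff V)
    ultimately show ?thesis
      by simp
  qed
  have product: "distr M lborel X \<Otimes>\<^sub>M distr M (lborel \<Otimes>\<^sub>M lborel) (\<lambda>\<omega>. (Y \<omega>, Z \<omega>))
      = distr M (lborel \<Otimes>\<^sub>M (lborel \<Otimes>\<^sub>M lborel)) (\<lambda>\<omega>. (X \<omega>, (Y \<omega>, Z \<omega>)))"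
    using indep by (rule distr_indep_triple) measurable
  have YZ: "distributed M (lborel \<Otimes>\<^sub>M lborel) (\<lambda>\<omega>. (Y \<omega>, Z \<omega>)) (\<lambda>(y, z). fY y * fZ z)"
    by (rule distributed_joint_indep[OF lborel.sigma_finite_measure_axioms
          lborel.sigma_finite_measure_axioms Y Z indep_YZ])
  have "sigma_finite_measure (lborel \<Otimes>\<^sub>M lborel :: (real \<times> real) measure)"
    unfolding lborel_prod by (rule lborel.sigma_finite_measure_axioms)
  from distributed_joint_indep'[OF lborel.sigma_finite_measure_axioms this X YZ product]
  show ?thesis
    by (simp add: case_prod_beta')
qed

lemma distributed_if_nn_integral_indicator:
  assumes X: "X \<in> measurable M lborel" and f: "f \<in> borel_measurable lborel"
    and eq: "\<And>A. A \<in> sets borel \<Longrightarrow> (\<integral>\<^sup>+\<omega>. indicator A (X \<omega>) \<partial>M) = (\<integral>\<^sup>+s. f s * indicator A s \<partial>lborel)"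
  shows "distributed M lborel X f"
  unfolding distributed_def
proof (intro conjI f X)
  show "distr M lborel X = density lborel f"
  proof (rule measure_eqI)
    fix A
    assume "A \<in> sets (distr M lborel X)"
    then have A: "A \<in> sets borel"
      by simp
    have "emeasure (distr M lborel X) A = (\<integral>\<^sup>+y. indicator A y \<partial>distr M lborel X)"
      using A by (simp add: nn_integral_indicator)
    also have "\<dots> = (\<integral>\<^sup>+\<omega>. indicator A (X \<omega>) \<partial>M)"
      using A by (intro nn_integral_distr X) simp
    also have "\<dots> = emeasure (density lborel f) A"
      using A f by (simp add: eq emeasure_density)
    finally show "emeasure (distr M lborel X) A = emeasure (density lborel f) A" .
  qed simp
qed

locale chi_triple = prob_space +
  fixes a b c :: "'a \<Rightarrow> real" and ka kb kc :: real
  assumes joint: "distributed M (lborel \<Otimes>\<^sub>M (lborel \<Otimes>\<^sub>M lborel)) (\<lambda>\<omega>. (a \<omega>, (b \<omega>, c \<omega>)))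
      (\<lambda>(x, (y, z)). ennreal (chi_density ka x) * (ennreal (chi_density kb y) * ennreal (chi_density kc z)))"
    and orders: "ka = kb + kc" "kb > 0" "kc > 0"
begin

lemma nn_integral_cond_number_Mmat:
  fixes G :: "real \<Rightarrow> ennreal"
  assumes G [measurable]: "G \<in> borel_measurable borel" and "x \<noteq> 0"
  shows "(\<integral>\<^sup>+\<omega>. G (cond_number (Mmat x (-x) (a \<omega>) (b \<omega>) (c \<omega>))) \<partial>M)
       = (\<integral>\<^sup>+s. G s * ennreal (indicator {1<..} s * cond_density kc s) \<partial>lborel) * param_const ka kb kc"
proof -
  have sf: "sigma_finite_measure (lborel \<Otimes>\<^sub>M lborel :: (real \<times> real) measure)"
    unfolding lborel_prod by (rule lborel.sigma_finite_measure_axioms)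
  let ?f = "\<lambda>(x, (y, z)). ennreal (chi_density ka x) * (ennreal (chi_density kb y) * ennreal (chi_density kc z))"
  have "(\<integral>\<^sup>+\<omega>. G (cond_number (Mmat x (-x) (a \<omega>) (b \<omega>) (c \<omega>))) \<partial>M)
      = (\<integral>\<^sup>+p. ?f p * (\<lambda>(a, (b, c)). G (cond_number (Mmat x (-x) a b c))) p \<partial>(lborel \<Otimes>\<^sub>M (lborel \<Otimes>\<^sub>M lborel)))"
    by (subst distributed_nn_integral[OF joint]) (auto simp: case_prod_beta)
  also have "\<dots> = (\<integral>\<^sup>+a. (\<integral>\<^sup>+q. ?f (a, q) * G (cond_number (Mmat x (-x) a (fst q) (snd q)))
      \<partial>(lborel \<Otimes>\<^sub>M lborel)) \<partial>lborel)"
    by (subst sigma_finite_measure.nn_integral_fst[OF sf, symmetric]) (auto simp: case_prod_beta)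
  also have "\<dots> = (\<integral>\<^sup>+a. (\<integral>\<^sup>+b. (\<integral>\<^sup>+c. G (cond_number (Mmat x (-x) a b c))
            * (ennreal (chi_density ka a) * (ennreal (chi_density kb b) * ennreal (chi_density kc c)))
            \<partial>lborel) \<partial>lborel) \<partial>lborel)"
    by (rule nn_integral_cong, subst lborel.nn_integral_fst[symmetric]) (auto simp: mult_ac)
  also have "\<dots> = (\<integral>\<^sup>+s. G s * ennreal (indicator {1<..} s * cond_density kc s) \<partial>lborel) * param_const ka kb kc"
    by (simp add: nn_integral_cond_number_chi[OF G \<open>x \<noteq> 0\<close> orders] nn_integral_cond_of_param_t_density)
  finally show ?thesis .
qed

lemma param_const_eq:
  shows "param_const ka kb kc = ennreal (2 / Beta (kc / 2) (kc / 2))"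
proof -
  define B where "B = Beta (kc / 2) (kc / 2)"
  have B: "B > 0"
    unfolding B_def Beta_def using orders by simp
  have "1 = (\<integral>\<^sup>+\<omega>. 1 \<partial>M)"
    by (simp add: emeasure_space_1)
  also have "\<dots> = ennreal (B / 2) * param_const ka kb kc"
    using nn_integral_cond_number_Mmat[of "\<lambda>_. 1" 1] nn_integral_cond_density[of kc] orders
    by (simp add: B_def)
  finally have "ennreal (B / 2) * param_const ka kb kc = 1" ..
  moreover have "ennreal (2 / B) * ennreal (B / 2) = 1"
    using B by (simp flip: ennreal_mult)
  ultimately show ?thesis
    unfolding B_def[symmetric] by (metis mult.assoc mult.commute mult_1)
qed

lemma distributed_cond_number_Mmat:
  assumes "x \<noteq> 0"
  shows "distributed M lborel (\<lambda>\<omega>. cond_number (Mmat x (-x) (a \<omega>) (b \<omega>) (c \<omega>)))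
      (\<lambda>s. ennreal (indicator {1<..} s * (2 / Beta (kc / 2) (kc / 2) * cond_density kc s)))"
proof (rule distributed_if_nn_integral_indicator)
  have "(\<lambda>\<omega>. (a \<omega>, (b \<omega>, c \<omega>))) \<in> M \<rightarrow>\<^sub>M lborel \<Otimes>\<^sub>M (lborel \<Otimes>\<^sub>M lborel)"
    using joint by (rule distributed_measurable)
  then have [measurable]: "a \<in> borel_measurable M" "b \<in> borel_measurable M" "c \<in> borel_measurable M"
    by (simp_all add: measurable_pair_iff measurable_lborel2 comp_def)
  show "(\<lambda>\<omega>. cond_number (Mmat x (-x) (a \<omega>) (b \<omega>) (c \<omega>))) \<in> M \<rightarrow>\<^sub>M lborel"
    unfolding measurable_lborel2 by measurable
  show "(\<lambda>s. ennreal (indicator {1<..} s * (2 / Beta (kc / 2) (kc / 2) * cond_density kc s)))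
      \<in> borel_measurable lborel"
    by measurable
  fix A :: "real set"
  assume [measurable]: "A \<in> sets borel"
  have "(\<integral>\<^sup>+\<omega>. indicator A (cond_number (Mmat x (-x) (a \<omega>) (b \<omega>) (c \<omega>))) \<partial>M)
      = (\<integral>\<^sup>+s. indicator A s * ennreal (indicator {1<..} s * cond_density kc s) \<partial>lborel)
        * ennreal (2 / Beta (kc / 2) (kc / 2))"
    by (simp add: nn_integral_cond_number_Mmat[OF _ \<open>x \<noteq> 0\<close>] param_const_eq)
  also have "\<dots> = (\<integral>\<^sup>+s. ennreal (indicator {1<..} s * (2 / Beta (kc / 2) (kc / 2) * cond_density kc s))
      * indicator A s \<partial>lborel)"
    using orders cond_density_nonneg[of kc]
    by (subst nn_integral_multc[symmetric])
      (auto intro!: nn_integral_cong simp: indicator_def ennreal_mult[symmetric] Beta_def mult_ac,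
        measurable)
  finally show "(\<integral>\<^sup>+\<omega>. indicator A (cond_number (Mmat x (-x) (a \<omega>) (b \<omega>) (c \<omega>))) \<partial>M)
      = (\<integral>\<^sup>+s. ennreal (indicator {1<..} s * (2 / Beta (kc / 2) (kc / 2) * cond_density kc s))
        * indicator A s \<partial>lborel)" .
qed

end

theorem mainTheorem5:
  fixes P :: "'s measure" and a b c :: "'s \<Rightarrow> real"
    and L :: nat and \<beta> x1 x2 :: real
  assumes "prob_space P"
    and "L \<ge> 2" and "\<beta> > 0"
    and "x1 = - x2" and "x1 \<noteq> 0"
    and "distributed P lborel a (\<lambda>x. ennreal (chi_density (\<beta> * real L) x))"
    and "distributed P lborel b (\<lambda>x. ennreal (chi_density \<beta> x))"
    and "distributed P lborel c (\<lambda>x. ennreal (chi_density (\<beta> * (real L - 1)) x))"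
    and "prob_space.indep_vars P (\<lambda>_. borel) (\<lambda>i. [a, b, c] ! i) {0, 1, 2}"
  shows "distributed P lborel (\<lambda>\<omega>. cond_number (Mmat x1 x2 (a \<omega>) (b \<omega>) (c \<omega>)))
           (\<lambda>\<sigma>. ennreal (indicator {1..} \<sigma> * f_kappa L \<beta> \<sigma>))
       \<and> (\<forall>\<sigma>\<ge>1. f_kappa 2 1 \<sigma> = 2 / (pi * sqrt \<sigma> * (\<sigma> + 1)))"
proof
  show "\<forall>\<sigma>\<ge>1. f_kappa 2 1 \<sigma> = 2 / (pi * sqrt \<sigma> * (\<sigma> + 1))"
    by (simp add: f_kappa_2_1)
next
  interpret prob_space P
    by fact
  have chi_triple: "chi_triple P a b c (\<beta> * real L) \<beta> (\<beta> * (real L - 1))"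
    by (intro chi_triple.intro chi_triple_axioms.intro)
      (use assms(1-3) distributed_indep_triple[OF assms(9,6,7,8)] in \<open>simp_all add: algebra_simps\<close>)
  have "distributed P lborel (\<lambda>\<omega>. cond_number (Mmat x1 (- x1) (a \<omega>) (b \<omega>) (c \<omega>)))
      (\<lambda>s. ennreal (indicator {1<..} s * (2 / Beta (\<beta> * (real L - 1) / 2) (\<beta> * (real L - 1) / 2)
        * cond_density (\<beta> * (real L - 1)) s)))"
    using assms(5) by (rule chi_triple.distributed_cond_number_Mmat[OF chi_triple])
  moreover have "AE s in lborel. ennreal (indicator {1<..} s * (2 / Beta (\<beta> * (real L - 1) / 2)
      (\<beta> * (real L - 1) / 2) * cond_density (\<beta> * (real L - 1)) s))
      = ennreal (indicator {1..} s * f_kappa L \<beta> s)"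
    using AE_lborel_singleton[of 1]
    by eventually_elim (auto simp: indicator_def f_kappa_eq_cond_density[OF assms(2,3)])
  ultimately show "distributed P lborel (\<lambda>\<omega>. cond_number (Mmat x1 x2 (a \<omega>) (b \<omega>) (c \<omega>)))
      (\<lambda>\<sigma>. ennreal (indicator {1..} \<sigma> * f_kappa L \<beta> \<sigma>))"
    unfolding \<open>x1 = - x2\<close> minus_minus
    by (subst distributed_cong_density[symmetric]) (auto simp: f_kappa_def cond_density_def)
qed

end
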